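(* Let $\tau$ be a complex number with $\operatorname{Im}\tau>0$ and $q=e^{2\pi i\tau}$. Then $$\sum_{\substack{m=1\\ m\equiv1 \pmod 2}}^{\infty}\frac{q^{m}+q^{3m}}{1-q^{8m}}-\sum_{\substack{m=1\\ m\equiv1 \pmod 2}}^{\infty}\frac{q^{5m}+q^{7m}}{1-q^{8m}}=\frac{\eta^4(16\tau)}{\eta^2(8\tau)}\cdot\frac{\varphi(q^2)}{q\,\psi(q^8)}.$$
   Context: Notation: $(a;q)_\infty=\prod_{j\ge0}(1-aq^j)$; for real $a$, $q^a=e^{2\pi i a\tau}$. The Dedekind eta function is $\eta(\tau)=q^{1/24}(q;q)_\infty$, so $\eta(k\tau)=q^{k/24}(q^k;q^k)_\infty$. Ramanujan's theta functions: $\varphi(q)=\sum_{j=-\infty}^{\infty}q^{j^2}$ and $\psi(q)=\sum_{j=0}^{\infty}q^{j(j+1)/2}$. *)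

theory Defs
  imports "HOL-Analysis.Analysis"
begin

definition nome :: "complex \<Rightarrow> complex" where
  "nome \<tau> = exp (2 * pi * \<i> * \<tau>)"

definition qpoch_inf :: "complex \<Rightarrow> complex \<Rightarrow> complex" where
  "qpoch_inf a q = (\<Prod>j. (1 - a * q ^ j))"

definition dedekind_eta :: "complex \<Rightarrow> complex" where
  "dedekind_eta \<tau> = exp (2 * pi * \<i> * \<tau> / 24) * qpoch_inf (nome \<tau>) (nome \<tau>)"

definition ram_phi :: "complex \<Rightarrow> complex" where
  "ram_phi q = (\<Sum>\<^sub>\<infinity>j::int. q ^ nat (j\<^sup>2))"

definition ram_psi :: "complex \<Rightarrow> complex" where
  "ram_psi q = (\<Sum>j::nat. q ^ (j * (j + 1) div 2))"

end

(*
  With t = q^(2k+1) the k-th term of the difference is (t + t^3)/(1 + t^4), so the left-hand side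
  is q times Kronecker's bilateral series  sum over m in Z of x^m/(1 - y p^m)  at p = q^8, x = q^2,
  y = -q^4.  Kronecker's identity evaluates this series as
      (p;p)^2 (xy;p) (p/(xy);p) / ((x;p) (p/x;p) (y;p) (p/y;p)),
  while the right-hand side becomes a q-product through the definition of eta and the product forms
  of phi and psi given by the Jacobi triple product.  The two products agree after splitting them
  into residue classes of the exponents, the decisive cancellation being Euler's identity
  (q;q^2) (-q;q) = 1.

  Kronecker's identity and the triple product are both obtained as limits of finite identities: a
  partial fraction expansion in y with the 2n+1 nodes p^(k-n), and the q-binomial theorem for
  the product of 1 + w p^(i-n) over i < 2n.  In both, the coefficients converge termwise and are
  uniformly bounded, so Tannery's theorem lets n tend to infinity.
*)
theory Submission
  imports Defs
begin

context comm_monoid_set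
begin

lemma lessThan_add_split:
  fixes m n :: nat
  shows "F g {..<m + n} = F g {..<m} \<^bold>* F (\<lambda>i. g (m + i)) {..<n}"
  by (induction n) (simp_all add: assoc)

lemma atMost_double_split:
  fixes n :: nat
  shows "F g {..2 * n} = F (\<lambda>m. g (n + m)) {..n} \<^bold>* F (\<lambda>m. g (n - Suc m)) {..<n}"
proof -
  have "{..2 * n} = {..<n + Suc n}" by auto
  hence "F g {..2 * n} = F g {..<n} \<^bold>* F (\<lambda>m. g (n + m)) {..<Suc n}"
    by (simp only: lessThan_add_split)
  thus ?thesis by (simp only: nat_diff_reindex lessThan_Suc_atMost commute)
qed

lemma atMost_remove_split:
  fixes i N :: nat
  assumes "i \<le> N"
  shows "F g ({..N} - {i}) = F g {..<i} \<^bold>* F (\<lambda>t. g (Suc (i + t))) {..<N - i}"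
proof -
  have "{..N} - {i} = {..<i} \<union> {Suc i..N}" using assms by auto
  moreover have "F g ({..<i} \<union> {Suc i..N}) = F g {..<i} \<^bold>* F g {Suc i..N}"
    by (rule union_disjoint) auto
  moreover have "F g {Suc i..N} = F (\<lambda>t. g (Suc (i + t))) {..<N - i}"
    by (rule reindex_bij_witness[where i = "\<lambda>t. Suc (i + t)" and j = "\<lambda>k. k - Suc i"]) auto
  ultimately show ?thesis by simp
qed

end


lemma Suc_choose_two [simp]: "Suc k choose 2 = (k choose 2) + k"
  by (simp add: numeral_2_eq_2)

lemma add_choose_two: "(a + b) choose 2 = (a choose 2) + (b choose 2) + a * b"
  by (induction b) auto

lemma choose_two_double: "2 * (k choose 2) + k = k * k"
  by (induction k) auto

lemma summable_power_mult_power_choose_two: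
  fixes r s :: real
  assumes "0 \<le> r" "0 \<le> s" "s < 1"
  shows "summable (\<lambda>m. r ^ m * s ^ (m choose 2))"
proof -
  have "(\<lambda>m. r * s ^ m) \<longlonglongrightarrow> r * 0"
    by (intro tendsto_intros LIMSEQ_power_zero) (use assms in auto)
  then obtain N where N: "\<And>m. m \<ge> N \<Longrightarrow> r * s ^ m < 1/2"
    using order_tendstoD(2)[of _ "r * 0" sequentially "1/2"] by (auto simp: eventually_sequentially)
  show ?thesis
  proof (rule summable_ratio_test[of "1/2" N])
    fix m assume "m \<ge> N"
    have "r ^ Suc m * s ^ (Suc m choose 2) = (r * s ^ m) * (r ^ m * s ^ (m choose 2))"
      by (simp add: power_add algebra_simps)
    also have "\<dots> \<le> 1/2 * (r ^ m * s ^ (m choose 2))"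
      using N[OF \<open>m \<ge> N\<close>] assms by (intro mult_right_mono) auto
    finally show "norm (r ^ Suc m * s ^ (Suc m choose 2)) \<le> 1/2 * norm (r ^ m * s ^ (m choose 2))"
      using assms by simp
  qed simp
qed

lemma power_inj_norm_less_one:
  fixes p :: "'a::real_normed_field"
  assumes "p \<noteq> 0" "norm p < 1" "p ^ i = p ^ j"
  shows "i = j"
proof -
  have "norm p ^ i = norm p ^ j" using assms(3) by (metis norm_power)
  thus ?thesis using assms(1,2) by (metis linorder_neqE_nat power_strict_decreasing_iff order_less_irrefl zero_less_norm_iff)
qed

lemma tannery_two_sided:
  fixes c d :: "nat \<Rightarrow> nat \<Rightarrow> 'a::{real_normed_algebra, banach}" and u v :: "nat \<Rightarrow> 'a"
  assumes lim: "\<And>m. (\<lambda>n. c n m) \<longlonglongrightarrow> C" "\<And>m. (\<lambda>n. d n m) \<longlonglongrightarrow> C"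
    and bound: "\<And>n m. norm (c n m) \<le> B" "\<And>n m. norm (d n m) \<le> B"
    and summable: "summable (\<lambda>m. norm (u m))" "summable (\<lambda>m. norm (v m))"
    and partial: "(\<lambda>n. (\<Sum>m\<le>n. c n m * u m) + (\<Sum>m<n. d n m * v m)) \<longlonglongrightarrow> L"
  shows "(\<lambda>m. C * u m + C * v m) sums L"
proof -
  define A where "A m n = (if m \<le> n then c n m * u m else 0) + (if m < n then d n m * v m else 0)"
    for m n
  have "(\<lambda>n. A m n) \<longlonglongrightarrow> C * u m + C * v m" for m
  proof (rule Lim_transform_eventually)
    show "(\<lambda>n. c n m * u m + d n m * v m) \<longlonglongrightarrow> C * u m + C * v m"
      by (intro tendsto_intros lim)
    show "\<forall>\<^sub>F n in sequentially. c n m * u m + d n m * v m = A m n"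
      using eventually_gt_at_top[of m] by eventually_elim (simp add: A_def)
  qed
  moreover have "norm (A m n) \<le> B * norm (u m) + B * norm (v m)" for m n
  proof -
    have "norm (c n m * u m) \<le> B * norm (u m)" "norm (d n m * v m) \<le> B * norm (v m)"
      using bound by (auto intro!: norm_mult_ineq[THEN order.trans] mult_right_mono)
    hence "norm (if m \<le> n then c n m * u m else 0) + norm (if m < n then d n m * v m else 0)
             \<le> B * norm (u m) + B * norm (v m)"
      using order.trans[OF norm_ge_zero bound(1)] by (intro add_mono) auto
    thus ?thesis unfolding A_def by (rule norm_triangle_ineq[THEN order.trans])
  qed
  hence "\<forall>\<^sub>F (m, n) in sequentially \<times>\<^sub>F sequentially.
           norm (A m n) \<le> B * norm (u m) + B * norm (v m)"
    by (intro always_eventually) auto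
  moreover have "summable (\<lambda>m. B * norm (u m) + B * norm (v m))"
    by (intro summable_add summable_mult summable)
  ultimately have "(\<forall>\<^sub>F n in sequentially. summable (\<lambda>m. norm (A m n)))
      \<and> summable (\<lambda>m. norm (C * u m + C * v m))
      \<and> (\<lambda>n. \<Sum>m. A m n) \<longlonglongrightarrow> (\<Sum>m. C * u m + C * v m)"
    by (rule tannerys_theorem) simp
  moreover have "(\<Sum>m. A m n) = (\<Sum>m\<le>n. c n m * u m) + (\<Sum>m<n. d n m * v m)" for n
  proof -
    have "(\<Sum>m. A m n) = (\<Sum>m\<le>n. A m n)"
      by (rule suminf_finite) (auto simp: A_def)
    also have "\<dots> = (\<Sum>m\<le>n. c n m * u m) + (\<Sum>m<Suc n. if m < n then d n m * v m else 0)"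
      by (simp add: A_def sum.distrib lessThan_Suc_atMost)
    finally show ?thesis by simp
  qed
  ultimately have "summable (\<lambda>m. C * u m + C * v m)" "(\<Sum>m. C * u m + C * v m) = L"
    using partial LIMSEQ_unique summable_norm_cancel by auto
  thus ?thesis by (simp add: sums_iff)
qed

section \<open>\<open>q\<close>-Pochhammer symbols\<close>

definition qpoch :: "complex \<Rightarrow> complex \<Rightarrow> nat \<Rightarrow> complex" where
  "qpoch a q n = (\<Prod>j<n. 1 - a * q ^ j)"

lemma qpoch_0 [simp]: "qpoch a q 0 = 1"
  by (simp add: qpoch_def)

lemma qpoch_Suc: "qpoch a q (Suc n) = qpoch a q n * (1 - a * q ^ n)"
  by (simp add: qpoch_def)

lemma qpoch_Suc_shift: "qpoch a q (Suc n) = (1 - a) * qpoch (a * q) q n"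
  by (induction n) (auto simp: qpoch_def power_mult_distrib mult_ac)

lemma norm_mult_power_less_one:
  fixes a q :: complex
  assumes "norm a < 1" "norm q < 1"
  shows "norm (a * q ^ j) < 1"
proof -
  have "norm a * norm q ^ j \<le> norm a"
    using assms by (intro mult_left_le power_le_one) auto
  thus ?thesis using assms(1) by (simp add: norm_mult norm_power)
qed

lemma convergent_prod_qpoch:
  fixes a q :: complex
  assumes "norm q < 1"
  shows "convergent_prod (\<lambda>j. 1 - a * q ^ j)"
proof -
  have "summable (\<lambda>j. norm a * norm q ^ j)"
    using assms by (intro summable_mult summable_geometric) auto
  hence "summable (\<lambda>j. norm ((1 - a * q ^ j) - 1))"
    by (simp add: norm_mult norm_power)
  thus ?thesis
    by (intro abs_convergent_prod_imp_convergent_prod summable_imp_abs_convergent_prod)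
qed

lemma qpoch_tendsto:
  assumes "norm q < 1"
  shows "(\<lambda>n. qpoch a q n) \<longlonglongrightarrow> qpoch_inf a q"
proof -
  have "(\<lambda>n. \<Prod>j\<le>n. 1 - a * q ^ j) \<longlonglongrightarrow> qpoch_inf a q"
    unfolding qpoch_inf_def by (rule convergent_prod_LIMSEQ[OF convergent_prod_qpoch[OF assms]])
  thus ?thesis unfolding qpoch_def by (simp add: LIMSEQ_lessThan_iff_atMost)
qed

lemma qpoch_tendsto_at_top:
  assumes "norm q < 1" "filterlim f sequentially F"
  shows "((\<lambda>n. qpoch a q (f n)) \<longlongrightarrow> qpoch_inf a q) F"
  using filterlim_compose[OF qpoch_tendsto[OF assms(1)] assms(2)] .

lemma qpoch_inf_nonzero:
  assumes "norm q < 1" "\<And>j. a * q ^ j \<noteq> 1"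
  shows "qpoch_inf a q \<noteq> 0"
  unfolding qpoch_inf_def using prodinf_nonzero[OF convergent_prod_qpoch[OF assms(1)]] assms(2) by auto

lemma qpoch_inf_nonzero_norm_less:
  fixes a q :: complex
  assumes "norm a < 1" "norm q < 1"
  shows "qpoch_inf a q \<noteq> 0"
  using norm_mult_power_less_one[OF assms]
  by (intro qpoch_inf_nonzero assms(2)) (metis norm_one order_less_irrefl)

lemma qpoch_inf_self_nonzero:
  fixes q :: complex
  assumes "norm q < 1"
  shows "qpoch_inf q q \<noteq> 0"
  by (rule qpoch_inf_nonzero_norm_less[OF assms assms])

lemma qpoch_self_nonzero:
  fixes q :: complex
  assumes "norm q < 1"
  shows "qpoch q q n \<noteq> 0"
  using norm_mult_power_less_one[OF assms assms]
  by (auto simp: qpoch_def) (metis norm_one order_less_irrefl)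

lemma qpoch_inf_unfold:
  assumes "norm q < 1"
  shows "qpoch_inf a q = (1 - a) * qpoch_inf (a * q) q"
proof -
  have "(\<lambda>n. qpoch a q (Suc n)) \<longlonglongrightarrow> qpoch_inf a q"
    using qpoch_tendsto[OF assms] by (rule LIMSEQ_Suc)
  moreover have "(\<lambda>n. qpoch a q (Suc n)) \<longlonglongrightarrow> (1 - a) * qpoch_inf (a * q) q"
    unfolding qpoch_Suc_shift by (intro tendsto_intros qpoch_tendsto assms)
  ultimately show ?thesis using LIMSEQ_unique by blast
qed

lemma qpoch_inf_mult_minus:
  assumes "norm q < 1"
  shows "qpoch_inf a q * qpoch_inf (-a) q = qpoch_inf (a^2) (q^2)"
proof -
  have "qpoch a q n * qpoch (-a) q n = qpoch (a^2) (q^2) n" for n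
    by (induction n) (auto simp: qpoch_def power_mult_distrib algebra_simps power2_eq_square power_mult)
  moreover have "norm (q^2) < 1" using assms by (simp add: norm_power power_less_one_iff)
  ultimately have "(\<lambda>n. qpoch a q n * qpoch (-a) q n) \<longlonglongrightarrow> qpoch_inf (a^2) (q^2)"
    by (simp add: qpoch_tendsto)
  moreover have "(\<lambda>n. qpoch a q n * qpoch (-a) q n) \<longlonglongrightarrow> qpoch_inf a q * qpoch_inf (-a) q"
    by (intro tendsto_intros qpoch_tendsto assms)
  ultimately show ?thesis using LIMSEQ_unique by blast
qed

lemma qpoch_inf_even_odd:
  assumes "norm q < 1"
  shows "qpoch_inf a (q^2) * qpoch_inf (a * q) (q^2) = qpoch_inf a q"
proof -
  have "qpoch a (q^2) n * qpoch (a * q) (q^2) n = qpoch a q (2 * n)" for n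
    by (induction n) (auto simp: qpoch_def power_mult_distrib algebra_simps power2_eq_square power_mult)
  moreover have "(\<lambda>n. qpoch a q (2 * n)) \<longlonglongrightarrow> qpoch_inf a q"
    using assms mult_nat_left_at_top by (intro qpoch_tendsto_at_top) auto
  ultimately have "(\<lambda>n. qpoch a (q^2) n * qpoch (a * q) (q^2) n) \<longlonglongrightarrow> qpoch_inf a q"
    by simp
  moreover have "norm (q^2) < 1" using assms by (simp add: norm_power power_less_one_iff)
  hence "(\<lambda>n. qpoch a (q^2) n * qpoch (a * q) (q^2) n)
           \<longlonglongrightarrow> qpoch_inf a (q^2) * qpoch_inf (a * q) (q^2)"
    by (intro tendsto_intros qpoch_tendsto)
  ultimately show ?thesis using LIMSEQ_unique by blast
qed

lemma qpoch_inf_euler: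
  fixes q :: complex
  assumes "norm q < 1"
  shows "qpoch_inf q (q^2) * qpoch_inf (-q) q = 1"
proof -
  have "qpoch_inf q q * (qpoch_inf q (q^2) * qpoch_inf (-q) q)
          = qpoch_inf q (q^2) * (qpoch_inf q q * qpoch_inf (-q) q)"
    by (simp add: mult_ac)
  also have "\<dots> = qpoch_inf q (q^2) * qpoch_inf (q^2) (q^2)"
    by (simp add: qpoch_inf_mult_minus[OF assms])
  also have "\<dots> = qpoch_inf q q * 1"
    using qpoch_inf_even_odd[OF assms, of q] by (simp add: power2_eq_square)
  finally show ?thesis using qpoch_inf_self_nonzero[OF assms] by simp
qed

lemma norm_qpoch_le:
  fixes a q :: complex
  assumes "norm q < 1"
  shows "norm (qpoch a q n) \<le> exp (norm a / (1 - norm q))"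
proof -
  have "norm (qpoch a q n) = (\<Prod>j<n. norm (1 - a * q ^ j))"
    by (simp add: qpoch_def prod_norm)
  also have "\<dots> \<le> (\<Prod>j<n. exp (norm a * norm q ^ j))"
  proof (rule prod_mono)
    fix j
    have "norm (1 - a * q ^ j) \<le> 1 + norm a * norm q ^ j"
      using norm_triangle_ineq4[of 1 "a * q ^ j"] by (simp add: norm_mult norm_power)
    also have "\<dots> \<le> exp (norm a * norm q ^ j)" by (rule exp_ge_add_one_self[THEN order.trans]) simp
    finally show "0 \<le> norm (1 - a * q ^ j) \<and> norm (1 - a * q ^ j) \<le> exp (norm a * norm q ^ j)"
      by simp
  qed
  also have "\<dots> = exp (norm a * (\<Sum>j<n. norm q ^ j))"
    by (simp add: exp_sum sum_distrib_left)
  also have "\<dots> \<le> exp (norm a / (1 - norm q))"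
  proof -
    have "(\<Sum>j<n. norm q ^ j) = (1 - norm q ^ n) / (1 - norm q)"
      using assms by (subst sum_gp_strict) auto
    also have "\<dots> \<le> 1 / (1 - norm q)"
      using assms by (intro divide_right_mono) auto
    finally have "norm a * (\<Sum>j<n. norm q ^ j) \<le> norm a * (1 / (1 - norm q))"
      by (rule mult_left_mono) simp
    thus ?thesis by simp
  qed
  finally show ?thesis .
qed

lemma qpoch_self_inverse_bounded:
  fixes q :: complex
  assumes "norm q < 1"
  obtains K where "K > 0" "\<And>n. norm (inverse (qpoch q q n)) \<le> K"
proof -
  have "(\<lambda>n. inverse (qpoch q q n)) \<longlonglongrightarrow> inverse (qpoch_inf q q)"
    by (intro tendsto_inverse qpoch_tendsto assms qpoch_inf_self_nonzero)
  hence "Bseq (\<lambda>n. inverse (qpoch q q n))"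
    by (intro convergent_imp_Bseq) (auto simp: convergent_def)
  thus ?thesis using that by (auto elim: BseqE)
qed

lemma qpoch_quotient_bounded:
  fixes a b q :: complex
  assumes "norm q < 1"
  obtains C where "C \<ge> 0"
    "\<And>i j k l. norm (qpoch a q i * qpoch b q j / (qpoch q q k * qpoch q q l)) \<le> C"
proof -
  obtain K where K: "K > 0" "\<And>n. norm (inverse (qpoch q q n)) \<le> K"
    using qpoch_self_inverse_bounded[OF assms] by blast
  define C where "C = exp (norm a / (1 - norm q)) * exp (norm b / (1 - norm q)) * K * K"
  have "norm (qpoch a q i * qpoch b q j / (qpoch q q k * qpoch q q l)) \<le> C" for i j k l
  proof -
    have "norm (qpoch a q i * qpoch b q j / (qpoch q q k * qpoch q q l)) =
       norm (qpoch a q i) * norm (qpoch b q j) * norm (inverse (qpoch q q k)) * norm (inverse (qpoch q q l))"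
      by (simp add: norm_mult norm_divide divide_inverse)
    also have "\<dots> \<le> C" unfolding C_def
      using norm_qpoch_le[OF assms, of a i] norm_qpoch_le[OF assms, of b j] K
      by (intro mult_mono) auto
    finally show ?thesis .
  qed
  moreover have "C \<ge> 0" using K by (simp add: C_def)
  ultimately show ?thesis using that by blast
qed

section \<open>The \<open>q\<close>-binomial theorem and the Jacobi triple product\<close>

definition qbinom :: "complex \<Rightarrow> nat \<Rightarrow> nat \<Rightarrow> complex" where
  "qbinom q N k = (if k \<le> N then qpoch q q N / (qpoch q q k * qpoch q q (N - k)) else 0)"

lemma qbinom_0 [simp]: "norm q < 1 \<Longrightarrow> qbinom q N 0 = 1"
  using qpoch_self_nonzero by (simp add: qbinom_def)

lemma qbinom_pascal:
  fixes q :: complex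
  assumes q: "norm q < 1" and "k \<le> N"
  shows "qbinom q (Suc N) (Suc k) = qbinom q N (Suc k) + q ^ (N - k) * qbinom q N k"
proof (cases "k = N")
  case True
  thus ?thesis using qpoch_self_nonzero[OF q] by (simp add: qbinom_def)
next
  case False
  then obtain m where N: "N = Suc (k + m)" using \<open>k \<le> N\<close> less_imp_Suc_add le_neq_implies_less by blast
  define P where "P = qpoch q q"
  define u where "u = 1 - q * q ^ k"
  define v where "v = 1 - q * q ^ m"
  have nz: "P j \<noteq> 0" "1 - q * q ^ j \<noteq> 0" for j
    unfolding P_def using qpoch_self_nonzero[OF q, of "Suc j"] by (auto simp: qpoch_Suc)
  have "u \<noteq> 0" "v \<noteq> 0" using nz(2) by (auto simp: u_def v_def)
  have PS: "P (Suc j) = P j * (1 - q * q ^ j)" for j unfolding P_def by (rule qpoch_Suc)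
  have "qbinom q (Suc N) (Suc k) = P N * (1 - q * q ^ N) / (P k * u * (P m * v))"
    by (simp add: qbinom_def N P_def[symmetric] PS u_def v_def)
  also have "1 - q * q ^ N = v + q ^ Suc m * u"
    unfolding u_def v_def N by (simp add: power_add algebra_simps)
  also have "P N * (v + q ^ Suc m * u) / (P k * u * (P m * v))
        = P N / (P k * u * P m) + q ^ Suc m * (P N / (P k * (P m * v)))"
    using nz \<open>u \<noteq> 0\<close> \<open>v \<noteq> 0\<close> by (simp add: field_simps)
  also have "\<dots> = qbinom q N (Suc k) + q ^ (N - k) * qbinom q N k"
    by (simp add: qbinom_def N P_def[symmetric] PS u_def v_def)
  finally show ?thesis .
qed

lemma qbinomial_theorem:
  fixes q x :: complex
  assumes q: "norm q < 1"
  shows "(\<Prod>i<N. 1 + x * q ^ i) = (\<Sum>k\<le>N. qbinom q N k * q ^ (k choose 2) * x ^ k)"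
proof (induction N)
  case 0
  then show ?case using q by (simp add: binomial_eq_0)
next
  case (Suc N)
  define A where "A k = qbinom q N k * q ^ (k choose 2) * x ^ k" for k
  have pascal: "qbinom q (Suc N) (Suc k) * q ^ (Suc k choose 2) * x ^ Suc k
      = qbinom q N (Suc k) * q ^ (Suc k choose 2) * x ^ Suc k + A k * x * q ^ N"
    if "k \<le> N" for k
  proof -
    have "q ^ (N - k) * q ^ (Suc k choose 2) = q ^ (k choose 2) * q ^ N"
      using that by (simp add: add.commute flip: power_add)
    thus ?thesis
      unfolding qbinom_pascal[OF q that] A_def by (simp add: algebra_simps)
  qed
  have "(\<Sum>k\<le>Suc N. qbinom q (Suc N) k * q ^ (k choose 2) * x ^ k)
      = 1 + (\<Sum>k\<le>N. qbinom q (Suc N) (Suc k) * q ^ (Suc k choose 2) * x ^ Suc k)"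
    using q by (subst sum.atMost_Suc_shift) (simp add: binomial_eq_0)
  also have "\<dots> = (1 + (\<Sum>k\<le>N. qbinom q N (Suc k) * q ^ (Suc k choose 2) * x ^ Suc k))
                    + (\<Sum>k\<le>N. A k * x * q ^ N)"
    using pascal by (simp add: sum.distrib)
  also have "1 + (\<Sum>k\<le>N. qbinom q N (Suc k) * q ^ (Suc k choose 2) * x ^ Suc k)
      = (\<Sum>k\<le>Suc N. A k)"
    by (subst sum.atMost_Suc_shift) (simp add: A_def binomial_eq_0 q)
  also have "\<dots> = (\<Sum>k\<le>N. A k)"
    by (simp add: A_def qbinom_def)
  also have "(\<Sum>k\<le>N. A k) + (\<Sum>k\<le>N. A k * x * q ^ N) = (\<Sum>k\<le>N. A k) * (1 + x * q ^ N)"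
    by (simp add: sum_distrib_right distrib_left mult.assoc)
  also have "\<dots> = (\<Prod>i<Suc N. 1 + x * q ^ i)"
    using Suc by (simp add: A_def)
  finally show ?case ..
qed

lemma qbinom_bounded:
  fixes q :: complex
  assumes "norm q < 1"
  obtains B where "\<And>N k. norm (qbinom q N k) \<le> B"
proof -
  obtain C where C: "C \<ge> 0" "\<And>i j k l. norm (qpoch q q i * qpoch 0 q j / (qpoch q q k * qpoch q q l)) \<le> C"
    using qpoch_quotient_bounded[OF assms] by blast
  have "norm (qbinom q N k) \<le> C" for N k
    using C(1) C(2)[of N 0 k "N - k"] by (simp add: qbinom_def)
  thus ?thesis using that by blast
qed

lemma qbinom_tendsto:
  fixes q :: complex
  assumes q: "norm q < 1"
    and lim: "filterlim N sequentially F" "filterlim k sequentially F" "filterlim l sequentially F"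
    and eq: "eventually (\<lambda>n. N n = k n + l n) F"
  shows "((\<lambda>n. qbinom q (N n) (k n)) \<longlongrightarrow> 1 / qpoch_inf q q) F"
proof -
  have L: "qpoch_inf q q \<noteq> 0" by (rule qpoch_inf_self_nonzero[OF q])
  have "((\<lambda>n. qpoch q q (N n) / (qpoch q q (k n) * qpoch q q (l n)))
          \<longlongrightarrow> qpoch_inf q q / (qpoch_inf q q * qpoch_inf q q)) F"
    using L by (intro tendsto_intros qpoch_tendsto_at_top q lim) simp
  moreover have "eventually (\<lambda>n. qpoch q q (N n) / (qpoch q q (k n) * qpoch q q (l n))
                                 = qbinom q (N n) (k n)) F"
    using eq by eventually_elim (simp add: qbinom_def)
  ultimately show ?thesis using L by (simp add: tendsto_cong)
qed

lemma prod_reflect_qpoch: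
  fixes p w :: complex
  assumes "p \<noteq> 0" "w \<noteq> 0"
  shows "(\<Prod>i<n. 1 + w / p ^ n * p ^ i) = w ^ n / p ^ (Suc n choose 2) * qpoch (-p/w) p n"
proof -
  have "(\<Prod>i<n. 1 + w / p ^ n * p ^ i) = (\<Prod>i<n. 1 + w / p ^ n * p ^ (n - Suc i))"
    by (rule prod.nat_diff_reindex[symmetric])
  also have "\<dots> = (\<Prod>i<n. w / p ^ Suc i * (1 - (-p/w) * p ^ i))"
  proof (rule prod.cong[OF refl])
    fix i assume "i \<in> {..<n}"
    hence "n = (n - Suc i) + Suc i" by simp
    hence "p ^ n = p ^ (n - Suc i) * p ^ Suc i" by (metis power_add)
    thus "1 + w / p ^ n * p ^ (n - Suc i) = w / p ^ Suc i * (1 - (-p/w) * p ^ i)"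
      using assms by (simp add: field_simps)
  qed
  also have "(\<Prod>i<n. w / p ^ Suc i) = w ^ n / p ^ (Suc n choose 2)" for n
    by (induction n) (simp_all add: binomial_eq_0 power_add field_simps)
  hence "(\<Prod>i<n. w / p ^ Suc i * (1 - (-p/w) * p ^ i)) = w ^ n / p ^ (Suc n choose 2) * qpoch (-p/w) p n"
    unfolding prod.distrib qpoch_def by simp
  finally show ?thesis .
qed

lemma jacobi_middle_terms:
  fixes p w :: complex
  assumes p: "p \<noteq> 0" and w: "w \<noteq> 0"
  shows "p ^ (Suc n choose 2) / w ^ n * (p ^ (n + m choose 2) * (w / p ^ n) ^ (n + m))
           = w ^ m * p ^ (m choose 2)"
    and "m < n \<Longrightarrow> p ^ (Suc n choose 2) / w ^ n * (p ^ (n - Suc m choose 2) * (w / p ^ n) ^ (n - Suc m))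
           = inverse w ^ Suc m * p ^ (Suc (Suc m) choose 2)"
proof -
  have "(n + m choose 2) + (Suc n choose 2) = (m choose 2) + n * (n + m)"
    using choose_two_double[of n] by (simp add: add_choose_two algebra_simps)
  hence "p ^ (n + m choose 2) * p ^ (Suc n choose 2) = p ^ (m choose 2) * p ^ (n * (n + m))"
    by (simp flip: power_add)
  moreover have "(w / p ^ n) ^ (n + m) = w ^ n * w ^ m / p ^ (n * (n + m))"
    by (simp add: power_divide power_mult[symmetric] power_add distrib_left)
  ultimately show "p ^ (Suc n choose 2) / w ^ n * (p ^ (n + m choose 2) * (w / p ^ n) ^ (n + m))
      = w ^ m * p ^ (m choose 2)"
    using p w by (simp add: field_simps)
  assume "m < n"
  then obtain k where n: "n = Suc (k + m)" by (metis add.commute less_imp_Suc_add)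
  have "(k choose 2) + (Suc n choose 2) = (Suc (Suc m) choose 2) + n * k"
    using choose_two_double[of k] add_choose_two[of k "Suc (Suc m)"] unfolding n
    by (simp add: algebra_simps)
  hence "p ^ (k choose 2) * p ^ (Suc n choose 2) = p ^ (Suc (Suc m) choose 2) * p ^ (n * k)"
    by (simp flip: power_add)
  moreover have "(w / p ^ n) ^ k = w ^ k / p ^ (n * k)"
    by (simp add: power_divide power_mult[symmetric])
  moreover have "w ^ n = w ^ k * w ^ Suc m" unfolding n by (simp flip: power_add)
  moreover have "n - Suc m = k" using n by simp
  ultimately show "p ^ (Suc n choose 2) / w ^ n * (p ^ (n - Suc m choose 2) * (w / p ^ n) ^ (n - Suc m))
      = inverse w ^ Suc m * p ^ (Suc (Suc m) choose 2)"
    using p w by (simp add: field_simps power_inverse)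
qed

text \<open>The \<open>q\<close>-binomial theorem for \<open>\<Prod>i<2n. 1 + w p\<^sup>i\<^sup>-\<^sup>n\<close>, with product and sum
  split at the middle index.\<close>
lemma jacobi_triple_product_finite:
  fixes p w :: complex
  assumes p: "norm p < 1" "p \<noteq> 0" and w: "w \<noteq> 0"
  shows "qpoch (-w) p n * qpoch (-p/w) p n =
    (\<Sum>m\<le>n. qbinom p (2*n) (n+m) * (w ^ m * p ^ (m choose 2))) +
    (\<Sum>m<n. qbinom p (2*n) (n - Suc m) * (inverse w ^ Suc m * p ^ (Suc (Suc m) choose 2)))"
proof -
  define x where "x = w / p ^ n"
  define c where "c = p ^ (Suc n choose 2) / w ^ n"
  have "(\<Prod>i<2*n. 1 + x * p ^ i) = (\<Prod>i<n. 1 + x * p ^ i) * (\<Prod>i<n. 1 + x * p ^ (n + i))"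
    by (simp add: mult_2 prod.lessThan_add_split)
  also have "(\<Prod>i<n. 1 + x * p ^ (n + i)) = qpoch (-w) p n"
    unfolding qpoch_def x_def using p by (intro prod.cong) (auto simp: power_add)
  finally have "qpoch (-w) p n * qpoch (-p/w) p n = c * (\<Prod>i<2*n. 1 + x * p ^ i)"
    unfolding x_def prod_reflect_qpoch[OF p(2) w] c_def using p w by (simp add: field_simps)
  also have "\<dots> = (\<Sum>m\<le>n. qbinom p (2*n) (n+m) * (c * (p ^ (n + m choose 2) * x ^ (n + m))))
      + (\<Sum>m<n. qbinom p (2*n) (n - Suc m) * (c * (p ^ (n - Suc m choose 2) * x ^ (n - Suc m))))"
    unfolding qbinomial_theorem[OF p(1)] sum.atMost_double_split
    by (simp add: sum_distrib_left distrib_left mult_ac)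
  also have "\<dots> = (\<Sum>m\<le>n. qbinom p (2*n) (n+m) * (w ^ m * p ^ (m choose 2))) +
    (\<Sum>m<n. qbinom p (2*n) (n - Suc m) * (inverse w ^ Suc m * p ^ (Suc (Suc m) choose 2)))"
    unfolding c_def x_def jacobi_middle_terms(1)[OF p(2) w]
    using jacobi_middle_terms(2)[OF p(2) w] by simp
  finally show ?thesis .
qed

lemma summable_norm_jacobi_terms:
  fixes p w :: complex
  assumes "norm p < 1" "w \<noteq> 0"
  shows "summable (\<lambda>m. norm (w ^ m * p ^ (m choose 2)))"
    and "summable (\<lambda>m. norm (inverse w ^ Suc m * p ^ (Suc (Suc m) choose 2)))"
proof -
  show "summable (\<lambda>m. norm (w ^ m * p ^ (m choose 2)))"
    using summable_power_mult_power_choose_two[of "norm w" "norm p"] assms(1)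
    by (simp add: norm_mult norm_power)
  have "summable (\<lambda>m. (norm p / norm w) ^ m * norm p ^ (m choose 2))"
    using assms by (intro summable_power_mult_power_choose_two) auto
  hence "summable (\<lambda>m. (norm p / norm w) ^ Suc m * norm p ^ (Suc m choose 2))"
    by (subst summable_Suc_iff)
  moreover have "norm (inverse w ^ Suc m * p ^ (Suc (Suc m) choose 2))
      = (norm p / norm w) ^ Suc m * norm p ^ (Suc m choose 2)" for m
    unfolding Suc_choose_two[of "Suc m"]
    by (simp add: norm_mult norm_power norm_inverse power_add power_divide divide_inverse
        power_mult_distrib mult_ac del: Suc_choose_two)
  ultimately show "summable (\<lambda>m. norm (inverse w ^ Suc m * p ^ (Suc (Suc m) choose 2)))"
    by simp
qed

theorem jacobi_triple_product:
  fixes p w :: complex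
  assumes p: "norm p < 1" "p \<noteq> 0" and w: "w \<noteq> 0"
  shows "(\<lambda>m. w ^ m * p ^ (m choose 2) + inverse w ^ Suc m * p ^ (Suc (Suc m) choose 2)) sums
           (qpoch_inf p p * qpoch_inf (-w) p * qpoch_inf (-p/w) p)"
proof -
  define L where "L = qpoch_inf p p"
  have L: "L \<noteq> 0" unfolding L_def by (rule qpoch_inf_self_nonzero[OF p(1)])
  obtain B where B: "\<And>N k. norm (qbinom p N k) \<le> B" using qbinom_bounded[OF p(1)] by blast
  have "(\<lambda>m. 1 / L * (w ^ m * p ^ (m choose 2)) + 1 / L * (inverse w ^ Suc m * p ^ (Suc (Suc m) choose 2)))
          sums (qpoch_inf (-w) p * qpoch_inf (-p/w) p)"
  proof (rule tannery_two_sided)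
    show "(\<lambda>n. qbinom p (2*n) (n+m)) \<longlonglongrightarrow> 1 / L" for m
      unfolding L_def
      by (intro qbinom_tendsto[where l = "\<lambda>n. n - m"] p(1) mult_nat_left_at_top
          filterlim_add_const_nat_at_top filterlim_minus_const_nat_at_top)
         (auto intro: eventually_mono[OF eventually_ge_at_top[of m]])
    show "(\<lambda>n. qbinom p (2*n) (n - Suc m)) \<longlonglongrightarrow> 1 / L" for m
      unfolding L_def
      by (intro qbinom_tendsto[where l = "\<lambda>n. n + Suc m"] p(1) mult_nat_left_at_top
          filterlim_add_const_nat_at_top filterlim_minus_const_nat_at_top)
         (auto intro: eventually_mono[OF eventually_ge_at_top[of "Suc m"]])
    show "(\<lambda>n. (\<Sum>m\<le>n. qbinom p (2*n) (n+m) * (w ^ m * p ^ (m choose 2))) +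
              (\<Sum>m<n. qbinom p (2*n) (n - Suc m) * (inverse w ^ Suc m * p ^ (Suc (Suc m) choose 2))))
            \<longlonglongrightarrow> qpoch_inf (-w) p * qpoch_inf (-p/w) p"
      unfolding jacobi_triple_product_finite[OF p w, symmetric]
      by (intro tendsto_intros qpoch_tendsto p)
  qed (use B summable_norm_jacobi_terms[OF p(1) w] in auto)
  from sums_mult[OF this, of L] L show ?thesis
    by (simp add: L_def algebra_simps)
qed

section \<open>Kronecker's identity\<close>

text \<open>Moving a new node \<open>\<alpha>\<close> into the Lagrange basis polynomial \<open>R\<close> of a node \<open>a\<close>,
  where \<open>1 - b y = \<beta> u + (1 - \<beta>)\<close> with \<open>u = 1 - \<alpha> y\<close>.\<close>
lemma lagrange_basis_extend:
  fixes a \<alpha> \<beta> d y u P R :: "'a::field"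
  assumes "a \<noteq> \<alpha>" "u = 1 - \<alpha> * y" "P = (1 - a * y) * R"
  shows "d * R * (\<beta> * u + (1 - \<beta>))
       = d * (a - \<beta> * \<alpha>) / (a - \<alpha>) * (u * R) - (1 - \<beta>) * (d * (\<alpha> / (a - \<alpha>))) * P"
proof -
  have "(a - \<alpha>) * (R * (\<beta> * u + (1 - \<beta>))) = (a - \<beta> * \<alpha>) * (u * R) - (1 - \<beta>) * \<alpha> * P"
    unfolding assms(2,3) by algebra
  hence "R * (\<beta> * u + (1 - \<beta>)) = ((a - \<beta> * \<alpha>) * (u * R) - (1 - \<beta>) * \<alpha> * P) / (a - \<alpha>)"
    using assms(1) by (simp add: eq_divide_eq mult.commute)
  hence "d * R * (\<beta> * u + (1 - \<beta>)) = d * (((a - \<beta> * \<alpha>) * (u * R) - (1 - \<beta>) * \<alpha> * P) / (a - \<alpha>))"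
    by (metis mult.assoc)
  thus ?thesis by (simp add: diff_divide_distrib right_diff_distrib mult_ac)
qed

lemma prod_partial_fractions_exists:
  fixes a b :: "'i \<Rightarrow> 'a::field"
  assumes "finite K" "inj_on a K" "\<And>k. k \<in> K \<Longrightarrow> a k \<noteq> 0"
  shows "\<exists>d. \<forall>y. (\<Prod>k\<in>K. 1 - b k * y) = (\<Prod>k\<in>K. b k / a k) * (\<Prod>k\<in>K. 1 - a k * y)
                    + (\<Sum>k\<in>K. d k * (\<Prod>j\<in>K - {k}. 1 - a j * y))"
  using assms
proof (induction K rule: finite_induct)
  case empty
  show ?case by simp
next
  case (insert i K)
  obtain d where d: "\<And>y. (\<Prod>k\<in>K. 1 - b k * y) = (\<Prod>k\<in>K. b k / a k) * (\<Prod>k\<in>K. 1 - a k * y)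
                           + (\<Sum>k\<in>K. d k * (\<Prod>j\<in>K - {k}. 1 - a j * y))"
    using insert.IH insert.prems by (auto simp: inj_on_insert)
  define \<alpha> where "\<alpha> = a i"
  define \<beta> where "\<beta> = b i / \<alpha>"
  define S where "S = (\<Sum>k\<in>K. d k * (\<alpha> / (a k - \<alpha>)))"
  define d' where "d' k = (if k = i then (1 - \<beta>) * ((\<Prod>k\<in>K. b k / a k) - S)
                           else d k * (a k - \<beta> * \<alpha>) / (a k - \<alpha>))" for k
  have "\<alpha> \<noteq> 0" unfolding \<alpha>_def using insert.prems(2) by auto
  have ne: "a k \<noteq> \<alpha>" if "k \<in> K" for k
    using insert.prems(1) that insert.hyps(2) unfolding \<alpha>_def inj_on_def by force
  show ?case
  proof (intro exI allI)
    fix y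
    define P where "P = (\<Prod>k\<in>K. 1 - a k * y)"
    define R where "R k = (\<Prod>j\<in>K - {k}. 1 - a j * y)" for k
    have split: "1 - b i * y = \<beta> * (1 - \<alpha> * y) + (1 - \<beta>)"
      unfolding \<beta>_def using \<open>\<alpha> \<noteq> 0\<close> by (simp add: field_simps)
    have "d k * R k * (1 - b i * y)
        = d' k * ((1 - \<alpha> * y) * R k) - (1 - \<beta>) * (d k * (\<alpha> / (a k - \<alpha>))) * P" if "k \<in> K" for k
    proof -
      have "P = (1 - a k * y) * R k"
        unfolding P_def R_def using insert.hyps(1) that by (rule prod.remove)
      moreover have "k \<noteq> i" using that insert.hyps(2) by auto
      ultimately show ?thesis
        unfolding split d'_def using lagrange_basis_extend[OF ne[OF that] refl] by simp
    qed
    hence "(\<Sum>k\<in>K. d k * R k) * (1 - b i * y)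
        = (\<Sum>k\<in>K. d' k * ((1 - \<alpha> * y) * R k)) - (1 - \<beta>) * S * P"
      unfolding S_def by (simp add: sum_distrib_right sum_distrib_left sum_subtractf mult_ac)
    moreover have "(\<Sum>k\<in>insert i K. d' k * (\<Prod>j\<in>insert i K - {k}. 1 - a j * y))
        = d' i * P + (\<Sum>k\<in>K. d' k * ((1 - \<alpha> * y) * R k))"
    proof -
      have "(\<Prod>j\<in>insert i K - {k}. 1 - a j * y) = (1 - \<alpha> * y) * R k" if "k \<in> K" for k
        using insert.hyps that by (auto simp: R_def \<alpha>_def insert_Diff_if)
      thus ?thesis using insert.hyps by (simp add: P_def)
    qed
    ultimately show "(\<Prod>k\<in>insert i K. 1 - b k * y)
        = (\<Prod>k\<in>insert i K. b k / a k) * (\<Prod>k\<in>insert i K. 1 - a k * y)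
          + (\<Sum>k\<in>insert i K. d' k * (\<Prod>j\<in>insert i K - {k}. 1 - a j * y))"
      using insert.hyps d[of y] split
      by (simp add: P_def R_def \<beta>_def d'_def \<alpha>_def) algebra
  qed
qed

lemma prod_partial_fractions:
  fixes a b :: "'i \<Rightarrow> 'a::field"
  assumes K: "finite K" "inj_on a K" "\<And>k. k \<in> K \<Longrightarrow> a k \<noteq> 0"
    and y: "\<And>k. k \<in> K \<Longrightarrow> a k * y \<noteq> 1"
  shows "(\<Prod>k\<in>K. 1 - b k * y) / (\<Prod>k\<in>K. 1 - a k * y) = (\<Prod>k\<in>K. b k / a k)
          + (\<Sum>k\<in>K. (\<Prod>j\<in>K. 1 - b j / a k) / (\<Prod>j\<in>K - {k}. 1 - a j / a k) / (1 - a k * y))"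
proof -
  obtain d where d: "\<And>y. (\<Prod>k\<in>K. 1 - b k * y) = (\<Prod>k\<in>K. b k / a k) * (\<Prod>k\<in>K. 1 - a k * y)
                           + (\<Sum>k\<in>K. d k * (\<Prod>j\<in>K - {k}. 1 - a j * y))"
    using prod_partial_fractions_exists[OF K] by blast
  text \<open>Evaluating at the root \<open>y = 1 / a m\<close> isolates the coefficient \<open>d m\<close>.\<close>
  have coeff: "d m = (\<Prod>j\<in>K. 1 - b j / a m) / (\<Prod>j\<in>K - {m}. 1 - a j / a m)" if m: "m \<in> K" for m
  proof -
    have vanish: "(\<Prod>j\<in>L. 1 - a j * (1 / a m)) = 0" if "m \<in> L" "finite L" for L
      using that K(3)[OF m] by (intro prod_zero) auto
    have "(\<Sum>k\<in>K - {m}. d k * (\<Prod>j\<in>K - {k}. 1 - a j * (1 / a m))) = 0"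
    proof (intro sum.neutral ballI)
      fix k assume "k \<in> K - {m}"
      hence "m \<in> K - {k}" using m by auto
      thus "d k * (\<Prod>j\<in>K - {k}. 1 - a j * (1 / a m)) = 0"
        using vanish[of "K - {k}"] K(1) by simp
    qed
    hence "(\<Prod>j\<in>K. 1 - b j * (1 / a m)) = d m * (\<Prod>j\<in>K - {m}. 1 - a j * (1 / a m))"
      unfolding d[of "1 / a m"] vanish[OF m K(1)] sum.remove[OF K(1) m] by simp
    moreover have "a j \<noteq> a m" if "j \<in> K - {m}" for j
      using K(2) m that by (auto dest: inj_onD)
    hence "(\<Prod>j\<in>K - {m}. 1 - a j / a m) \<noteq> 0"
      using K(1,3) m by simp
    ultimately show ?thesis by (simp add: field_simps)
  qed
  have nz: "1 - a k * y \<noteq> 0" if "k \<in> K" for k using y[OF that] by simp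
  hence P: "(\<Prod>k\<in>K. 1 - a k * y) \<noteq> 0" using K(1) by simp
  have "d k * (\<Prod>j\<in>K - {k}. 1 - a j * y) / (\<Prod>k\<in>K. 1 - a k * y) = d k / (1 - a k * y)"
    if "k \<in> K" for k
    using prod.remove[OF K(1) that, of "\<lambda>j. 1 - a j * y"] P by simp
  hence "(\<Sum>k\<in>K. d k * (\<Prod>j\<in>K - {k}. 1 - a j * y)) / (\<Prod>k\<in>K. 1 - a k * y)
      = (\<Sum>k\<in>K. d k / (1 - a k * y))"
    unfolding sum_divide_distrib by (rule sum.cong[OF refl])
  with P show ?thesis
    unfolding d[of y] add_divide_distrib by (simp add: coeff)
qed

definition kronecker_coeff :: "complex \<Rightarrow> complex \<Rightarrow> nat \<Rightarrow> nat \<Rightarrow> complex" where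
  "kronecker_coeff p x N k =
     qpoch x p (Suc (N - k)) * qpoch (p/x) p k / (qpoch p p k * qpoch p p (N - k))"

lemma kronecker_coeff_eq:
  fixes p x :: complex
  assumes p: "p \<noteq> 0" "norm p < 1" and x: "x \<noteq> 0" and i: "i \<le> N"
  shows "(\<Prod>j\<le>N. 1 - x * (p ^ j / p ^ i)) / (\<Prod>j\<in>{..N} - {i}. 1 - p ^ j / p ^ i)
       = x ^ i * kronecker_coeff p x N i"
proof -
  define f where "f j = 1 - x * (p ^ j / p ^ i)" for j
  define g where "g j = 1 - p ^ j / p ^ i" for j
  have pn: "1 - p * p ^ s \<noteq> 0" for s
    using qpoch_self_nonzero[OF p(2), of "Suc s"] by (auto simp: qpoch_Suc)
  have "(\<Prod>j\<le>N. f j) / (\<Prod>j\<in>{..N} - {i}. g j) = (1 - x) * (\<Prod>j\<in>{..N} - {i}. f j / g j)"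
    using i p by (simp add: prod.remove[of "{..N}" i] f_def prod_dividef)
  also have "(\<Prod>j\<in>{..N} - {i}. f j / g j)
      = (\<Prod>s<i. f (i - Suc s) / g (i - Suc s)) * (\<Prod>t<N - i. f (Suc (i + t)) / g (Suc (i + t)))"
    by (simp only: prod.atMost_remove_split[OF i] prod.nat_diff_reindex[of "\<lambda>j. f j / g j"])
  also have "(\<Prod>s<i. f (i - Suc s) / g (i - Suc s)) = (\<Prod>s<i. x * ((1 - (p/x) * p ^ s) / (1 - p * p ^ s)))"
  proof (rule prod.cong[OF refl])
    fix s assume "s \<in> {..<i}"
    hence "i = (i - Suc s) + Suc s" by simp
    hence "p ^ i = p ^ (i - Suc s) * (p * p ^ s)" by (metis power_add power_Suc)
    thus "f (i - Suc s) / g (i - Suc s) = x * ((1 - (p/x) * p ^ s) / (1 - p * p ^ s))"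
      unfolding f_def g_def using p x pn[of s] by (simp add: field_simps)
  qed
  also have "\<dots> = x ^ i * (qpoch (p/x) p i / qpoch p p i)"
    by (simp add: prod.distrib prod_dividef qpoch_def)
  also have "(\<Prod>t<N - i. f (Suc (i + t)) / g (Suc (i + t))) = qpoch (x * p) p (N - i) / qpoch p p (N - i)"
    unfolding qpoch_def prod_dividef[symmetric] f_def g_def using p
    by (intro prod.cong refl) (simp add: power_add field_simps)
  finally show ?thesis
    unfolding f_def g_def kronecker_coeff_def qpoch_Suc_shift by (simp add: field_simps)
qed

lemma geometric_partial_fractions:
  fixes p t x y :: complex
  assumes p: "p \<noteq> 0" "norm p < 1" and x: "x \<noteq> 0" and t: "t \<noteq> 0"
    and y: "\<And>k. k \<le> N \<Longrightarrow> t * p ^ k * y \<noteq> 1"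
  shows "(\<Prod>k\<le>N. 1 - x * (t * p ^ k) * y) / (\<Prod>k\<le>N. 1 - t * p ^ k * y)
       = x ^ Suc N + (\<Sum>k\<le>N. x ^ k * kronecker_coeff p x N k / (1 - t * p ^ k * y))"
proof -
  have "inj_on (\<lambda>k. t * p ^ k) {..N}"
    using t power_inj_norm_less_one[OF p] by (auto intro: inj_onI)
  moreover have "(\<Prod>j\<le>N. 1 - x * (t * p ^ j) / (t * p ^ k)) / (\<Prod>j\<in>{..N} - {k}. 1 - t * p ^ j / (t * p ^ k))
      = x ^ k * kronecker_coeff p x N k" if "k \<le> N" for k
    using kronecker_coeff_eq[OF p x that] t by (simp add: mult.left_commute[of x])
  moreover have "(\<Prod>k\<le>N. x * (t * p ^ k) / (t * p ^ k)) = x ^ Suc N"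
    using t p by simp
  ultimately show ?thesis
    using prod_partial_fractions[of "{..N}" "\<lambda>k. t * p ^ k" y "\<lambda>k. x * (t * p ^ k)"] p t y
    by simp
qed

lemma power_middle_nodes:
  fixes p :: complex
  assumes "p \<noteq> 0"
  shows "1 / p ^ n * p ^ (n + m) = p ^ m"
    and "m < n \<Longrightarrow> 1 / p ^ n * p ^ (n - Suc m) = 1 / (p * p ^ m)"
proof -
  show "1 / p ^ n * p ^ (n + m) = p ^ m" using assms by (simp add: power_add)
  assume "m < n"
  hence "n = (n - Suc m) + Suc m" by simp
  hence "p ^ n = p ^ (n - Suc m) * (p * p ^ m)" by (metis power_add power_Suc)
  thus "1 / p ^ n * p ^ (n - Suc m) = 1 / (p * p ^ m)" using assms by (simp add: field_simps)
qed

lemma kronecker_reflected_factor: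
  fixes p x y :: complex
  assumes "p \<noteq> 0" "x \<noteq> 0" "y \<noteq> 0" "p * p ^ m \<noteq> y"
  shows "(1 - x * (1 / (p * p ^ m)) * y) / (1 - 1 / (p * p ^ m) * y)
       = x * ((1 - p / (x * y) * p ^ m) / (1 - p / y * p ^ m))"
proof -
  define P where "P = p * p ^ m"
  have "P \<noteq> 0" "y - P \<noteq> 0" using assms by (auto simp: P_def)
  have "(1 - x * (1 / P) * y) / (1 - 1 / P * y) = (P - x * y) / (P - y)"
    using \<open>P \<noteq> 0\<close> \<open>y - P \<noteq> 0\<close> by (simp add: field_simps)
  also have "\<dots> = (x * y - P) / (y - P)"
    by (metis minus_diff_eq minus_divide_divide)
  also have "\<dots> = x * (((x * y - P) / (x * y)) / ((y - P) / y))"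
    using assms \<open>y - P \<noteq> 0\<close> by (simp add: field_simps)
  also have "\<dots> = x * ((1 - p / (x * y) * p ^ m) / (1 - p / y * p ^ m))"
    using assms by (simp add: P_def field_simps)
  finally show ?thesis unfolding P_def .
qed

lemma kronecker_finite_product_side:
  fixes p x y :: complex
  assumes "p \<noteq> 0" "x \<noteq> 0" "y \<noteq> 0" "\<And>m. p * p ^ m \<noteq> y"
  shows "(\<Prod>k\<le>2*n. 1 - x * (1 / p ^ n * p ^ k) * y) / (\<Prod>k\<le>2*n. 1 - 1 / p ^ n * p ^ k * y)
       = x ^ n * (qpoch (x*y) p (Suc n) / qpoch y p (Suc n) * (qpoch (p/(x*y)) p n / qpoch (p/y) p n))"
proof -
  have upper: "(\<Prod>m\<le>n. (1 - x * (1 / p ^ n * p ^ (n + m)) * y) / (1 - 1 / p ^ n * p ^ (n + m) * y))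
      = (\<Prod>m\<le>n. (1 - x * y * p ^ m) / (1 - y * p ^ m))"
    unfolding power_middle_nodes(1)[OF assms(1)] by (simp add: mult_ac)
  have lower: "(\<Prod>m<n. (1 - x * (1 / p ^ n * p ^ (n - Suc m)) * y) / (1 - 1 / p ^ n * p ^ (n - Suc m) * y))
      = (\<Prod>m<n. x * ((1 - p / (x * y) * p ^ m) / (1 - p / y * p ^ m)))"
  proof (rule prod.cong[OF refl])
    fix m assume "m \<in> {..<n}"
    hence "m < n" by simp
    show "(1 - x * (1 / p ^ n * p ^ (n - Suc m)) * y) / (1 - 1 / p ^ n * p ^ (n - Suc m) * y)
        = x * ((1 - p / (x * y) * p ^ m) / (1 - p / y * p ^ m))"
      unfolding power_middle_nodes(2)[OF assms(1) \<open>m < n\<close>]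
      by (rule kronecker_reflected_factor[OF assms(1-3) assms(4)])
  qed
  have "(\<Prod>k\<le>2*n. 1 - x * (1 / p ^ n * p ^ k) * y) / (\<Prod>k\<le>2*n. 1 - 1 / p ^ n * p ^ k * y)
      = (\<Prod>k\<le>2*n. (1 - x * (1 / p ^ n * p ^ k) * y) / (1 - 1 / p ^ n * p ^ k * y))"
    by (simp add: prod_dividef)
  also have "\<dots> = (\<Prod>m\<le>n. (1 - x * y * p ^ m) / (1 - y * p ^ m))
      * (\<Prod>m<n. x * ((1 - p / (x * y) * p ^ m) / (1 - p / y * p ^ m)))"
    unfolding prod.atMost_double_split upper lower ..
  also have "\<dots> = x ^ n * (qpoch (x*y) p (Suc n) / qpoch y p (Suc n) * (qpoch (p/(x*y)) p n / qpoch (p/y) p n))"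
    by (simp add: qpoch_def prod.distrib prod_dividef lessThan_Suc_atMost)
  finally show ?thesis .
qed

lemma kronecker_finite_sum_side:
  fixes p x y :: complex
  assumes "p \<noteq> 0" "x \<noteq> 0"
  shows "x ^ Suc (2*n) + (\<Sum>k\<le>2*n. x ^ k * kronecker_coeff p x (2*n) k / (1 - 1 / p ^ n * p ^ k * y))
       = x ^ n * (x ^ Suc n + (\<Sum>m\<le>n. kronecker_coeff p x (2*n) (n+m) * (x ^ m / (1 - y * p ^ m)))
           + (\<Sum>m<n. kronecker_coeff p x (2*n) (n - Suc m) * (inverse x ^ Suc m / (1 - y / (p * p ^ m)))))"
proof -
  have xpow: "x ^ (n - Suc m) = x ^ n * inverse x ^ Suc m" if "m < n" for m
  proof -
    from that have "n = (n - Suc m) + Suc m" by simp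
    hence "x ^ n = x ^ (n - Suc m) * x ^ Suc m" by (metis power_add)
    thus ?thesis using assms(2) by (simp add: power_inverse field_simps)
  qed
  have "(\<Sum>m<n. x ^ (n - Suc m) * kronecker_coeff p x (2*n) (n - Suc m) / (1 - 1 / p ^ n * p ^ (n - Suc m) * y))
      = (\<Sum>m<n. x ^ n * (kronecker_coeff p x (2*n) (n - Suc m) * (inverse x ^ Suc m / (1 - y / (p * p ^ m)))))"
  proof (rule sum.cong[OF refl])
    fix m assume "m \<in> {..<n}"
    hence "m < n" by simp
    show "x ^ (n - Suc m) * kronecker_coeff p x (2*n) (n - Suc m) / (1 - 1 / p ^ n * p ^ (n - Suc m) * y)
        = x ^ n * (kronecker_coeff p x (2*n) (n - Suc m) * (inverse x ^ Suc m / (1 - y / (p * p ^ m))))"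
      unfolding power_middle_nodes(2)[OF assms(1) \<open>m < n\<close>] xpow[OF \<open>m < n\<close>] by (simp add: mult_ac)
  qed
  moreover have "(\<Sum>m\<le>n. x ^ (n + m) * kronecker_coeff p x (2*n) (n + m) / (1 - 1 / p ^ n * p ^ (n + m) * y))
      = (\<Sum>m\<le>n. x ^ n * (kronecker_coeff p x (2*n) (n+m) * (x ^ m / (1 - y * p ^ m))))"
    unfolding power_middle_nodes(1)[OF assms(1)] by (simp add: power_add mult_ac)
  ultimately have "(\<Sum>k\<le>2*n. x ^ k * kronecker_coeff p x (2*n) k / (1 - 1 / p ^ n * p ^ k * y))
      = x ^ n * ((\<Sum>m\<le>n. kronecker_coeff p x (2*n) (n+m) * (x ^ m / (1 - y * p ^ m)))
         + (\<Sum>m<n. kronecker_coeff p x (2*n) (n - Suc m) * (inverse x ^ Suc m / (1 - y / (p * p ^ m)))))"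
    unfolding sum.atMost_double_split distrib_left sum_distrib_left by simp
  moreover have "x ^ Suc (2*n) = x ^ n * x ^ Suc n" by (simp add: mult_2 power_add)
  ultimately show ?thesis by (simp add: distrib_left add.assoc)
qed

text \<open>The partial fraction expansion with nodes \<open>p\<^sup>k\<^sup>-\<^sup>n\<close>, \<open>k \<le> 2n\<close>, split at the middle node.\<close>
lemma kronecker_finite:
  fixes p x y :: complex
  assumes p: "p \<noteq> 0" "norm p < 1" and x: "x \<noteq> 0"
    and y: "y \<noteq> 0" "\<And>m. y * p ^ m \<noteq> 1" "\<And>m. p * p ^ m \<noteq> y"
  shows "qpoch (x*y) p (Suc n) / qpoch y p (Suc n) * (qpoch (p/(x*y)) p n / qpoch (p/y) p n)
     = x ^ Suc n + (\<Sum>m\<le>n. kronecker_coeff p x (2*n) (n+m) * (x ^ m / (1 - y * p ^ m)))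
         + (\<Sum>m<n. kronecker_coeff p x (2*n) (n - Suc m) * (inverse x ^ Suc m / (1 - y / (p * p ^ m))))"
proof -
  have nodes: "1 / p ^ n * p ^ k * y \<noteq> 1" if "k \<le> 2 * n" for k
  proof (cases "n \<le> k")
    case True
    then obtain m where "k = n + m" using le_Suc_ex by blast
    thus ?thesis using power_middle_nodes(1)[OF p(1)] y(2)[of m] by (simp add: mult.commute)
  next
    case False
    define m where "m = n - Suc k"
    have "m < n" "k = n - Suc m" using False by (auto simp: m_def)
    hence "1 / p ^ n * p ^ k * y = y / (p * p ^ m)" using power_middle_nodes(2)[OF p(1)] by simp
    thus ?thesis using p(1) y(3)[of m] by (simp add: divide_eq_1_iff)
  qed
  have "1 / p ^ n \<noteq> 0" using p by simp
  from geometric_partial_fractions[where N = "2 * n", OF p x this nodes]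
  have "x ^ n * (qpoch (x*y) p (Suc n) / qpoch y p (Suc n) * (qpoch (p/(x*y)) p n / qpoch (p/y) p n))
      = x ^ n * (x ^ Suc n + (\<Sum>m\<le>n. kronecker_coeff p x (2*n) (n+m) * (x ^ m / (1 - y * p ^ m)))
         + (\<Sum>m<n. kronecker_coeff p x (2*n) (n - Suc m) * (inverse x ^ Suc m / (1 - y / (p * p ^ m)))))"
    unfolding kronecker_finite_product_side[OF p(1) x y(1,3)] kronecker_finite_sum_side[OF p(1) x] .
  moreover have "x ^ n \<noteq> 0" using x by simp
  ultimately show ?thesis by (rule mult_left_cancel[THEN iffD1, rotated])
qed

lemma kronecker_coeff_bounded:
  fixes p x :: complex
  assumes "norm p < 1"
  obtains C where "\<And>N k. norm (kronecker_coeff p x N k) \<le> C"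
  using qpoch_quotient_bounded[OF assms, of x "p/x"] unfolding kronecker_coeff_def by metis

lemma kronecker_coeff_tendsto:
  fixes p x :: complex
  assumes p: "norm p < 1"
    and lim: "filterlim k sequentially F" "filterlim l sequentially F"
    and eq: "eventually (\<lambda>n. N n = k n + l n) F"
  shows "((\<lambda>n. kronecker_coeff p x (N n) (k n))
           \<longlongrightarrow> qpoch_inf x p * qpoch_inf (p/x) p / qpoch_inf p p ^ 2) F"
proof -
  have L: "qpoch_inf p p \<noteq> 0" by (rule qpoch_inf_self_nonzero[OF p])
  have "filterlim (\<lambda>n. Suc (l n)) sequentially F"
    by (rule filterlim_compose[OF filterlim_Suc lim(2)])
  hence "((\<lambda>n. qpoch x p (Suc (l n)) * qpoch (p/x) p (k n) / (qpoch p p (k n) * qpoch p p (l n)))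
          \<longlongrightarrow> qpoch_inf x p * qpoch_inf (p/x) p / (qpoch_inf p p * qpoch_inf p p)) F"
    using L by (intro tendsto_intros qpoch_tendsto_at_top p lim) simp_all
  moreover have "eventually (\<lambda>n. qpoch x p (Suc (l n)) * qpoch (p/x) p (k n) / (qpoch p p (k n) * qpoch p p (l n))
                                 = kronecker_coeff p x (N n) (k n)) F"
    using eq by eventually_elim (simp add: kronecker_coeff_def)
  ultimately show ?thesis by (simp add: tendsto_cong power2_eq_square)
qed

lemma summable_norm_lambert_upper:
  fixes p x y :: complex
  assumes "norm p < 1" "norm x < 1"
  shows "summable (\<lambda>m. norm (x ^ m / (1 - y * p ^ m)))"
proof (rule summable_comparison_test_ev)
  have "(\<lambda>m. norm (1 - y * p ^ m)) \<longlonglongrightarrow> norm (1 - y * 0)"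
    by (intro tendsto_intros LIMSEQ_power_zero assms)
  hence "eventually (\<lambda>m. norm (1 - y * p ^ m) > 1/2) sequentially"
    by (intro order_tendstoD) auto
  thus "eventually (\<lambda>m. norm (norm (x ^ m / (1 - y * p ^ m))) \<le> 2 * norm x ^ m) sequentially"
  proof eventually_elim
    case (elim m)
    have "norm x ^ m / norm (1 - y * p ^ m) \<le> norm x ^ m / (1/2)"
      using elim by (intro divide_left_mono) auto
    thus ?case by (simp add: norm_divide norm_power)
  qed
  show "summable (\<lambda>m. 2 * norm x ^ m)"
    using assms by (intro summable_mult summable_geometric) auto
qed

lemma summable_norm_lambert_lower:
  fixes p x y :: complex
  assumes p: "p \<noteq> 0" "norm p < 1" "norm p < norm x" and y: "y \<noteq> 0" "\<And>m. p * p ^ m \<noteq> y"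
  shows "summable (\<lambda>m. norm (inverse x ^ Suc m / (1 - y / (p * p ^ m))))"
proof (rule summable_comparison_test_ev)
  have x: "x \<noteq> 0" using p by auto
  have "(\<lambda>m. norm (p * p ^ m - y)) \<longlonglongrightarrow> norm (p * 0 - y)"
    by (intro tendsto_intros LIMSEQ_power_zero) (use p in simp)
  hence "eventually (\<lambda>m. norm (p * p ^ m - y) > norm y / 2) sequentially"
    using y(1) by (intro order_tendstoD) auto
  thus "eventually (\<lambda>m. norm (norm (inverse x ^ Suc m / (1 - y / (p * p ^ m))))
                          \<le> 2 / norm y * norm (p / x) ^ Suc m) sequentially"
  proof eventually_elim
    case (elim m)
    have "inverse x ^ Suc m / (1 - y / (p * p ^ m)) = (p / x) ^ Suc m / (p * p ^ m - y)"
      using elim p(1) x by (auto simp: field_simps power_inverse)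
    hence "norm (inverse x ^ Suc m / (1 - y / (p * p ^ m))) = norm (p / x) ^ Suc m / norm (p * p ^ m - y)"
      by (simp add: norm_divide norm_power del: power_Suc)
    also have "\<dots> \<le> norm (p / x) ^ Suc m / (norm y / 2)"
      using elim y(1) by (intro divide_left_mono mult_pos_pos) auto
    finally show ?case by (simp add: mult.commute)
  qed
  show "summable (\<lambda>m. 2 / norm y * norm (p / x) ^ Suc m)"
    using p x by (intro summable_mult summable_geometric summable_Suc_iff[THEN iffD2])
                 (auto simp: norm_divide)
qed

lemma kronecker_finite_tendsto:
  fixes p x y :: complex
  assumes p: "p \<noteq> 0" "norm p < 1" and x: "x \<noteq> 0" "norm x < 1"
    and y: "y \<noteq> 0" "\<And>m. y * p ^ m \<noteq> 1" "\<And>m. p * p ^ m \<noteq> y"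
  shows "(\<lambda>n. (\<Sum>m\<le>n. kronecker_coeff p x (2*n) (n+m) * (x ^ m / (1 - y * p ^ m)))
              + (\<Sum>m<n. kronecker_coeff p x (2*n) (n - Suc m) * (inverse x ^ Suc m / (1 - y / (p * p ^ m)))))
         \<longlonglongrightarrow> qpoch_inf (x*y) p / qpoch_inf y p * (qpoch_inf (p/(x*y)) p / qpoch_inf (p/y) p)"
proof -
  have "p / y * p ^ j \<noteq> 1" for j using y(1) y(3)[of j] by (simp add: field_simps)
  hence "qpoch_inf y p \<noteq> 0" "qpoch_inf (p/y) p \<noteq> 0"
    using y(2) by (simp_all add: qpoch_inf_nonzero p)
  hence "(\<lambda>n. qpoch (x*y) p (Suc n) / qpoch y p (Suc n) * (qpoch (p/(x*y)) p n / qpoch (p/y) p n)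
              - x ^ Suc n)
        \<longlonglongrightarrow> qpoch_inf (x*y) p / qpoch_inf y p * (qpoch_inf (p/(x*y)) p / qpoch_inf (p/y) p) - 0"
    using x by (intro tendsto_intros qpoch_tendsto_at_top p filterlim_Suc filterlim_ident
                  LIMSEQ_Suc[OF LIMSEQ_power_zero]) auto
  moreover have "qpoch (x*y) p (Suc n) / qpoch y p (Suc n) * (qpoch (p/(x*y)) p n / qpoch (p/y) p n)
            - x ^ Suc n
      = (\<Sum>m\<le>n. kronecker_coeff p x (2*n) (n+m) * (x ^ m / (1 - y * p ^ m)))
        + (\<Sum>m<n. kronecker_coeff p x (2*n) (n - Suc m) * (inverse x ^ Suc m / (1 - y / (p * p ^ m))))"
    for n unfolding kronecker_finite[OF p x(1) y] by simp
  ultimately show ?thesis by simp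
qed

theorem kronecker_identity:
  fixes p x y :: complex
  assumes p: "p \<noteq> 0" "norm p < norm x" and x: "norm x < 1"
    and y: "y \<noteq> 0" "\<And>m. y * p ^ m \<noteq> 1" "\<And>m. p * p ^ m \<noteq> y"
  shows "(\<lambda>m. x ^ m / (1 - y * p ^ m) + inverse x ^ Suc m / (1 - y / (p * p ^ m))) sums
           (qpoch_inf p p ^ 2 * qpoch_inf (x*y) p * qpoch_inf (p/(x*y)) p /
             (qpoch_inf x p * qpoch_inf (p/x) p * qpoch_inf y p * qpoch_inf (p/y) p))"
proof -
  have np: "norm p < 1" using p x by simp
  have x0: "x \<noteq> 0" using p by auto
  define C where "C = qpoch_inf x p * qpoch_inf (p/x) p / qpoch_inf p p ^ 2"
  have "norm (p / x) < 1" using p x0 by (simp add: norm_divide field_simps)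
  hence "C \<noteq> 0"
    using qpoch_inf_nonzero_norm_less[OF x np] qpoch_inf_nonzero_norm_less[OF _ np, of "p/x"]
      qpoch_inf_self_nonzero[OF np] by (simp add: C_def)
  obtain B where B: "\<And>N k. norm (kronecker_coeff p x N k) \<le> B"
    using kronecker_coeff_bounded[OF np] by blast
  have "(\<lambda>m. C * (x ^ m / (1 - y * p ^ m)) + C * (inverse x ^ Suc m / (1 - y / (p * p ^ m))))
          sums (qpoch_inf (x*y) p / qpoch_inf y p * (qpoch_inf (p/(x*y)) p / qpoch_inf (p/y) p))"
  proof (rule tannery_two_sided)
    show "(\<lambda>n. kronecker_coeff p x (2*n) (n+m)) \<longlonglongrightarrow> C" for m
      unfolding C_def
      by (intro kronecker_coeff_tendsto[where l = "\<lambda>n. n - m"] np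
          filterlim_add_const_nat_at_top filterlim_minus_const_nat_at_top)
         (auto intro: eventually_mono[OF eventually_ge_at_top[of m]])
    show "(\<lambda>n. kronecker_coeff p x (2*n) (n - Suc m)) \<longlonglongrightarrow> C" for m
      unfolding C_def
      by (intro kronecker_coeff_tendsto[where l = "\<lambda>n. n + Suc m"] np
          filterlim_add_const_nat_at_top filterlim_minus_const_nat_at_top)
         (auto intro: eventually_mono[OF eventually_ge_at_top[of "Suc m"]])
    show "summable (\<lambda>m. norm (x ^ m / (1 - y * p ^ m)))"
      by (rule summable_norm_lambert_upper[OF np x])
    show "summable (\<lambda>m. norm (inverse x ^ Suc m / (1 - y / (p * p ^ m))))"
      by (rule summable_norm_lambert_lower[OF p(1) np p(2) y(1,3)])
  qed (use B kronecker_finite_tendsto[OF p(1) np x0 x y] in auto)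
  from sums_mult[OF this, of "1 / C"]
  have "(\<lambda>m. x ^ m / (1 - y * p ^ m) + inverse x ^ Suc m / (1 - y / (p * p ^ m))) sums
          (1 / C * (qpoch_inf (x*y) p / qpoch_inf y p * (qpoch_inf (p/(x*y)) p / qpoch_inf (p/y) p)))"
    using \<open>C \<noteq> 0\<close> by (simp add: distrib_left)
  thus ?thesis by (simp add: C_def power2_eq_square mult_ac)
qed

section \<open>Theta products and the identity\<close>

lemma infsum_int_eq_suminf_pairs:
  fixes g :: "int \<Rightarrow> 'a::banach"
  assumes "summable (\<lambda>m. norm (g (int m)))" "summable (\<lambda>m. norm (g (- int m - 1)))"
  shows "(\<Sum>\<^sub>\<infinity>j. g j) = (\<Sum>m. g (int m) + g (- int m - 1))"
proof -
  have "(g has_sum (\<Sum>m. g (int m))) (range int)"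
    using assms(1) by (subst has_sum_reindex)
      (auto simp: o_def intro!: norm_summable_imp_has_sum summable_sums summable_norm_cancel)
  moreover have "(g has_sum (\<Sum>m. g (- int m - 1))) (range (\<lambda>m. - int m - 1))"
    using assms(2) by (subst has_sum_reindex)
      (auto simp: o_def inj_on_def intro!: norm_summable_imp_has_sum summable_sums summable_norm_cancel)
  ultimately have "(g has_sum (\<Sum>m. g (int m)) + (\<Sum>m. g (- int m - 1)))
                     (range int \<union> range (\<lambda>m. - int m - 1))"
    by (rule has_sum_Un_disjoint) auto
  moreover have "range int \<union> range (\<lambda>m. - int m - 1) = UNIV"
  proof -
    have "j \<in> range int \<or> j \<in> range (\<lambda>m. - int m - 1)" for j :: int
      by (cases "j \<ge> 0") (auto simp: image_iff intro: exI[of _ "nat j"] exI[of _ "nat (- j - 1)"])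
    thus ?thesis by blast
  qed
  ultimately show ?thesis
    using assms by (simp add: infsumI suminf_add summable_norm_cancel)
qed

lemma summable_norm_power_ge:
  fixes P :: "'a::real_normed_algebra_1"
  assumes "norm P < 1" "\<And>m. f m \<ge> m"
  shows "summable (\<lambda>m. norm (P ^ f m))"
proof (rule summable_comparison_test'[of "\<lambda>m. norm P ^ m"])
  show "summable (\<lambda>m. norm P ^ m)" using assms(1) by simp
  show "norm (norm (P ^ f m)) \<le> norm P ^ m" for m
    using norm_power_ineq[of P "f m"] power_decreasing[OF assms(2)[of m], of "norm P"] assms(1)
    by simp
qed

lemma jacobi_terms_square:
  fixes P :: complex
  assumes "P \<noteq> 0"
  shows "P ^ m * (P^2) ^ (m choose 2) = P ^ (m * m)"
    and "inverse P ^ Suc m * (P^2) ^ (Suc (Suc m) choose 2) = P ^ (Suc m * Suc m)"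
proof -
  show "P ^ m * (P^2) ^ (m choose 2) = P ^ (m * m)"
    using choose_two_double[of m] by (simp add: add.commute flip: power_mult power_add)
  have "(P^2) ^ (Suc (Suc m) choose 2) = P ^ (2 * (Suc (Suc m) choose 2))"
    by (simp only: power_mult)
  also have "2 * (Suc (Suc m) choose 2) = Suc m + Suc m * Suc m"
    using choose_two_double[of "Suc (Suc m)"] by simp
  finally have "(P^2) ^ (Suc (Suc m) choose 2) = P ^ Suc m * P ^ (Suc m * Suc m)"
    by (simp only: power_add)
  moreover have "inverse P ^ Suc m * (P ^ Suc m * X) = X" for X
    using assms by (simp add: power_inverse field_simps del: power_Suc)
  ultimately show "inverse P ^ Suc m * (P^2) ^ (Suc (Suc m) choose 2) = P ^ (Suc m * Suc m)"
    by (simp only:)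
qed

text \<open>The triple product with \<open>p = P\<^sup>2\<close>, \<open>w = P\<close>.\<close>
lemma ram_phi_product:
  fixes P :: complex
  assumes P: "P \<noteq> 0" "norm P < 1"
  shows "ram_phi P = qpoch_inf (P^2) (P^2) * qpoch_inf (-P) (P^2) ^ 2"
proof -
  have "nat ((int m)^2) = m * m" "nat ((- int m - 1)^2) = Suc m * Suc m" for m
    by (simp_all add: power2_eq_square algebra_simps nat_mult_distrib flip: nat_int of_nat_mult)
  moreover have "summable (\<lambda>m. norm (P ^ (m * m)))" "summable (\<lambda>m. norm (P ^ (Suc m * Suc m)))"
    by (rule summable_norm_power_ge[OF P(2)]; simp)+
  ultimately have "ram_phi P = (\<Sum>m. P ^ (m * m) + P ^ (Suc m * Suc m))"
    unfolding ram_phi_def using infsum_int_eq_suminf_pairs[of "\<lambda>j. P ^ nat (j^2)"] by simp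
  moreover have "norm (P^2) < 1" "P^2 \<noteq> 0" using P by (simp_all add: norm_power power_less_one_iff)
  note jacobi_triple_product[OF this P(1), unfolded jacobi_terms_square[OF P(1)]]
  ultimately have "ram_phi P = qpoch_inf (P^2) (P^2) * qpoch_inf (-P) (P^2) * qpoch_inf (-(P^2)/P) (P^2)"
    by (simp add: sums_iff)
  thus ?thesis using P by (simp add: power2_eq_square)
qed

text \<open>The triple product with \<open>p = w = P\<close>, whose two halves coincide.\<close>
lemma ram_psi_product:
  fixes P :: complex
  assumes P: "P \<noteq> 0" "norm P < 1"
  shows "ram_psi P = qpoch_inf P P * qpoch_inf (-P) P ^ 2"
proof -
  have "P ^ m * P ^ (m choose 2) + inverse P ^ Suc m * P ^ (Suc (Suc m) choose 2)
          = 2 * P ^ (m * (m + 1) div 2)" for m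
  proof -
    have "P ^ m * P ^ (m choose 2) = P ^ (Suc m choose 2)"
      by (simp add: power_add mult.commute)
    moreover have "inverse P ^ Suc m * P ^ (Suc (Suc m) choose 2) = P ^ (Suc m choose 2)"
      unfolding Suc_choose_two[of "Suc m"] power_add using P(1)
      by (simp add: power_inverse field_simps del: Suc_choose_two)
    moreover have "m * (m + 1) div 2 = Suc m choose 2" by (simp add: choose_two)
    ultimately show ?thesis by simp
  qed
  hence "(\<lambda>m. 2 * P ^ (m * (m + 1) div 2)) sums (qpoch_inf P P * qpoch_inf (-P) P * qpoch_inf (-1) P)"
    using jacobi_triple_product[OF P(2,1,1)] P(1) by simp
  moreover have "qpoch_inf (-1) P = 2 * qpoch_inf (-P) P"
    using qpoch_inf_unfold[OF P(2), of "-1"] by simp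
  ultimately have "(\<lambda>m. P ^ (m * (m + 1) div 2)) sums (qpoch_inf P P * qpoch_inf (-P) P ^ 2)"
    using sums_divide[of _ _ 2] by (fastforce simp: power2_eq_square mult_ac)
  thus ?thesis unfolding ram_psi_def by (simp add: sums_iff)
qed

lemma lambert_term_eq_kronecker_term:
  fixes q :: complex
  assumes q: "q \<noteq> 0" "norm q < 1"
  shows "(q ^ (2*k+1) + q ^ (3*(2*k+1))) / (1 - q ^ (8*(2*k+1)))
       - (q ^ (5*(2*k+1)) + q ^ (7*(2*k+1))) / (1 - q ^ (8*(2*k+1)))
       = q * ((q^2) ^ k / (1 - (-(q^4)) * (q^8) ^ k)
              + inverse (q^2) ^ Suc k / (1 - (-(q^4)) / (q^8 * (q^8) ^ k)))"
proof -
  define t where "t = q ^ (2*k+1)"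
  have "t \<noteq> 0" using q by (simp add: t_def)
  have "norm t < 1" unfolding t_def norm_power Suc_eq_plus1[symmetric]
    using q by (intro power_Suc_less_one) auto
  hence "norm (t^4) < 1" by (simp add: norm_power power_less_one_iff)
  hence t4: "1 - t^4 \<noteq> 0" "1 + t^4 \<noteq> 0"
    by (auto simp: add_eq_0_iff)
  have pow: "q ^ (c * (2*k+1)) = t ^ c" for c
    unfolding t_def by (simp only: power_mult[symmetric] mult.commute)
  have tq: "t = q * (q^2) ^ k" by (simp add: t_def power_add flip: power_mult)
  hence e2: "(q^2) ^ k = t / q" using q by simp
  have "(q^8) ^ k = ((q^2) ^ k) ^ 4" by (simp flip: power_mult add: mult.commute)
  hence e8: "(q^8) ^ k = t^4 / q^4" by (simp add: e2 power_divide)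
  have "(q^2) ^ Suc k = q * t" by (simp add: tq power2_eq_square mult.assoc)
  hence einv: "inverse (q^2) ^ Suc k = 1 / (q * t)"
    by (metis power_inverse inverse_eq_divide)
  have "q * ((q^2) ^ k / (1 - (-(q^4)) * (q^8) ^ k)
              + inverse (q^2) ^ Suc k / (1 - (-(q^4)) / (q^8 * (q^8) ^ k)))
         = (t + t^3) / (1 + t^4)"
  proof -
    have den: "1 - (-(q^4)) * (t^4 / q^4) = 1 + t^4" "1 - (-(q^4)) / (q^8 * (t^4 / q^4)) = (1 + t^4) / t^4"
      using q \<open>t \<noteq> 0\<close> by (simp_all add: field_simps)
    have "1 / t / ((1 + t^4) / t^4) = t^3 / (1 + t^4)"
      using \<open>t \<noteq> 0\<close> t4(2) by (simp add: field_simps eval_nat_numeral)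
    hence "q * (1 / (q * t) / ((1 + t^4) / t^4)) = t^3 / (1 + t^4)"
      using q by (metis divide_divide_eq_left' nonzero_mult_div_cancel_left times_divide_eq_right mult_1_right)
    moreover have "q * (t / q / (1 + t^4)) = t / (1 + t^4)" using q by simp
    ultimately show ?thesis
      unfolding e2 e8 einv den distrib_left add_divide_distrib by simp
  qed
  moreover have "(t + t^3) / (1 - t^8) - (t^5 + t^7) / (1 - t^8) = (t + t^3) / (1 + t^4)"
  proof -
    have "1 - t^8 = (1 - t^4) * (1 + t^4)" "t + t^3 - (t^5 + t^7) = (t + t^3) * (1 - t^4)"
      by algebra+
    thus ?thesis using t4 by (simp add: diff_divide_distrib[symmetric])
  qed
  ultimately show ?thesis using pow[of 1] pow[of 3] pow[of 5] pow[of 7] pow[of 8] by simp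
qed

lemma summable_lambert_pair:
  fixes q :: complex
  assumes q: "norm q < 1" and "\<And>k. a k \<ge> k" "\<And>k. b k \<ge> k"
  shows "summable (\<lambda>k. (q ^ a k + q ^ b k) / (1 - q ^ (8*(2*k+1))))"
proof (rule summable_comparison_test'[of "\<lambda>k. 2 / (1 - norm q) * norm q ^ k"])
  show "summable (\<lambda>k. 2 / (1 - norm q) * norm q ^ k)"
    using q by (intro summable_mult summable_geometric) auto
  fix k :: nat
  have "norm (q ^ a k + q ^ b k) \<le> norm q ^ a k + norm q ^ b k"
    using norm_triangle_ineq[of "q ^ a k" "q ^ b k"] by (simp add: norm_power)
  also have "\<dots> \<le> norm q ^ k + norm q ^ k"
    using q assms(2,3) by (intro add_mono power_decreasing) auto
  finally have num: "norm (q ^ a k + q ^ b k) \<le> 2 * norm q ^ k" by simp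
  have "norm q ^ (8*(2*k+1)) \<le> norm q"
    using q power_decreasing[of 1 "8*(2*k+1)" "norm q"] by simp
  hence den: "1 - norm q \<le> norm (1 - q ^ (8*(2*k+1)))"
    using norm_triangle_ineq2[of 1 "q ^ (8*(2*k+1))"] by (simp add: norm_power)
  show "norm ((q ^ a k + q ^ b k) / (1 - q ^ (8*(2*k+1)))) \<le> 2 / (1 - norm q) * norm q ^ k"
    using frac_le[OF _ num _ den] q by (simp add: norm_divide)
qed

lemma kronecker_identity_q8:
  fixes q :: complex
  assumes q: "q \<noteq> 0" "norm q < 1"
  shows "(\<lambda>m. (q^2) ^ m / (1 - (-(q^4)) * (q^8) ^ m) + inverse (q^2) ^ Suc m / (1 - (-(q^4)) / (q^8 * (q^8) ^ m)))
      sums (qpoch_inf (q^8) (q^8) ^ 2 * qpoch_inf (-(q^6)) (q^8) * qpoch_inf (-(q^2)) (q^8)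
              / (qpoch_inf (q^2) (q^8) * qpoch_inf (q^6) (q^8) * qpoch_inf (-(q^4)) (q^8) ^ 2))"
proof -
  have np: "norm (q ^ k) < 1" if "k > 0" for k using q that by (simp add: norm_power power_less_one_iff)
  have "(\<lambda>m. (q^2) ^ m / (1 - (-(q^4)) * (q^8) ^ m) + inverse (q^2) ^ Suc m / (1 - (-(q^4)) / (q^8 * (q^8) ^ m)))
      sums (qpoch_inf (q^8) (q^8) ^ 2 * qpoch_inf (q^2 * -(q^4)) (q^8) * qpoch_inf (q^8 / (q^2 * -(q^4))) (q^8)
            / (qpoch_inf (q^2) (q^8) * qpoch_inf (q^8 / q^2) (q^8) * qpoch_inf (-(q^4)) (q^8)
               * qpoch_inf (q^8 / -(q^4)) (q^8)))"
  proof (rule kronecker_identity)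
    show "q^8 \<noteq> 0" "-(q^4) \<noteq> 0" using q by auto
    show "norm (q^8) < norm (q^2)" "norm (q^2) < 1"
      using q np[of 2] by (auto simp: norm_power power_strict_decreasing)
    show "-(q^4) * (q^8) ^ m \<noteq> 1" for m
    proof
      assume "-(q^4) * (q^8) ^ m = 1"
      moreover have "q ^ (4 + 8*m) = - (-(q^4) * (q^8) ^ m)" by (simp add: power_add power_mult)
      ultimately have "norm (q ^ (4 + 8*m)) = 1" by simp
      with np[of "4 + 8*m"] show False by simp
    qed
    show "q^8 * (q^8) ^ m \<noteq> -(q^4)" for m
    proof
      assume "q^8 * (q^8) ^ m = -(q^4)"
      moreover have "q ^ (8 + 8*m) = q^8 * (q^8) ^ m" by (simp add: power_add power_mult)
      ultimately have "norm q ^ (8 + 8*m) = norm q ^ 4" by (metis norm_minus_cancel norm_power)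
      hence "8 + 8*m = 4" using q by (intro power_inj_norm_less_one[of "norm q"]) auto
      thus False by simp
    qed
  qed
  moreover have "q^2 * -(q^4) = -(q^6)" "q^8 / -(q^6) = -(q^2)" "q^8 / q^2 = q^6"
      "q^8 / -(q^4) = -(q^4)"
    using q by (simp_all add: field_simps flip: power_add)
  ultimately show ?thesis by (simp only: power2_eq_square mult.assoc)
qed

lemma lambert_difference_eq_kronecker_product:
  fixes q :: complex
  assumes q: "q \<noteq> 0" "norm q < 1"
  shows "(\<Sum>k. (q ^ (2*k+1) + q ^ (3*(2*k+1))) / (1 - q ^ (8*(2*k+1))))
       - (\<Sum>k. (q ^ (5*(2*k+1)) + q ^ (7*(2*k+1))) / (1 - q ^ (8*(2*k+1))))
       = q * (qpoch_inf (q^8) (q^8) ^ 2 * qpoch_inf (-(q^6)) (q^8) * qpoch_inf (-(q^2)) (q^8)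
              / (qpoch_inf (q^2) (q^8) * qpoch_inf (q^6) (q^8) * qpoch_inf (-(q^4)) (q^8) ^ 2))"
proof -
  have "summable (\<lambda>k. (q ^ (2*k+1) + q ^ (3*(2*k+1))) / (1 - q ^ (8*(2*k+1))))"
      "summable (\<lambda>k. (q ^ (5*(2*k+1)) + q ^ (7*(2*k+1))) / (1 - q ^ (8*(2*k+1))))"
    by (rule summable_lambert_pair[OF q(2)]; simp)+
  hence "(\<Sum>k. (q ^ (2*k+1) + q ^ (3*(2*k+1))) / (1 - q ^ (8*(2*k+1))))
       - (\<Sum>k. (q ^ (5*(2*k+1)) + q ^ (7*(2*k+1))) / (1 - q ^ (8*(2*k+1))))
       = (\<Sum>k. q * ((q^2) ^ k / (1 - (-(q^4)) * (q^8) ^ k)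
                       + inverse (q^2) ^ Suc k / (1 - (-(q^4)) / (q^8 * (q^8) ^ k))))"
    by (simp only: suminf_diff lambert_term_eq_kronecker_term[OF q])
  also have "\<dots> = q * (qpoch_inf (q^8) (q^8) ^ 2 * qpoch_inf (-(q^6)) (q^8) * qpoch_inf (-(q^2)) (q^8)
              / (qpoch_inf (q^2) (q^8) * qpoch_inf (q^6) (q^8) * qpoch_inf (-(q^4)) (q^8) ^ 2))"
    using sums_mult[OF kronecker_identity_q8[OF q], of q] by (rule sums_unique[symmetric])
  finally show ?thesis .
qed

lemma kronecker_product_q8_eq_eta_theta_product:
  fixes q :: complex
  assumes q: "norm q < 1"
  shows "qpoch_inf (q^8) (q^8) ^ 2 * qpoch_inf (-(q^6)) (q^8) * qpoch_inf (-(q^2)) (q^8)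
           / (qpoch_inf (q^2) (q^8) * qpoch_inf (q^6) (q^8) * qpoch_inf (-(q^4)) (q^8) ^ 2)
       = qpoch_inf (q^16) (q^16) ^ 4 * qpoch_inf (q^4) (q^4) * qpoch_inf (-(q^2)) (q^4) ^ 2
           / (qpoch_inf (q^8) (q^8) ^ 3 * qpoch_inf (-(q^8)) (q^8) ^ 2)"
proof -
  have n: "norm (q ^ k) < 1" if "k > 0" for k using q that by (simp add: norm_power power_less_one_iff)
  have nz: "qpoch_inf (q ^ a) (q ^ b) \<noteq> 0" "qpoch_inf (- (q ^ a)) (q ^ b) \<noteq> 0"
    if "a > 0" "b > 0" for a b
    using qpoch_inf_nonzero_norm_less[OF _ n[OF that(2)], of "q ^ a"]
          qpoch_inf_nonzero_norm_less[OF _ n[OF that(2)], of "- (q ^ a)"] n[OF that(1)] by auto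
  define A where "A = qpoch_inf (q^8) (q^8)"
  define N where "N = qpoch_inf (-(q^8)) (q^8)"
  define P where "P k = qpoch_inf (q^k) (q^8)" for k
  define M where "M k = qpoch_inf (-(q^k)) (q^8)" for k
  have n8: "norm (q^8) < 1" "norm (q^4) < 1" using n by auto
  have A16: "qpoch_inf (q^16) (q^16) = A * N"
    using qpoch_inf_mult_minus[OF n8(1), of "q^8"] by (simp add: A_def N_def flip: power_mult)
  have A4: "qpoch_inf (q^4) (q^4) = P 4 * A"
    using qpoch_inf_even_odd[OF n8(2), of "q^4"] by (simp add: A_def P_def flip: power_mult power_add)
  have N2: "qpoch_inf (-(q^2)) (q^4) = M 2 * M 6"
    using qpoch_inf_even_odd[OF n8(2), of "-(q^2)"] by (simp add: M_def flip: power_mult power_add)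
  text \<open>The remaining factors cancel by Euler's identity \<open>(q\<^sup>8; q\<^sup>1\<^sup>6)\<^sub>\<infinity> (-q\<^sup>8; q\<^sup>8)\<^sub>\<infinity> = 1\<close>.\<close>
  have P4: "(P 2 * M 2) * (P 6 * M 6) = P 4"
    using qpoch_inf_mult_minus[OF n8(1), of "q^2"] qpoch_inf_mult_minus[OF n8(1), of "q^6"]
          qpoch_inf_even_odd[OF n8(1), of "q^4"]
    by (simp add: P_def M_def flip: power_mult power_add)
  have "N * (P 4 * M 4) = 1"
    using qpoch_inf_mult_minus[OF n8(1), of "q^4"] qpoch_inf_euler[OF n8(1)]
    by (simp add: P_def M_def N_def mult.commute flip: power_mult)
  hence euler: "N^2 * P 4 * (P 2 * M 2) * (P 6 * M 6) * M 4 ^ 2 = 1"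
    using P4 by algebra
  define C where "C = A^2 * N^2 * P 4 * (M 2 * M 6)^2"
  have "P 2 * P 6 * M 4 ^ 2 \<noteq> 0" "A ^ 3 * N ^ 2 \<noteq> 0"
    using nz[of 2 8] nz[of 6 8] nz[of 4 8] nz[of 8 8] by (simp_all add: A_def N_def P_def M_def)
  moreover have "A ^ 2 * M 6 * M 2 * (N^2 * P 4 * (P 2 * M 2) * (P 6 * M 6) * M 4 ^ 2)
      = C * (P 2 * P 6 * M 4 ^ 2)"
    unfolding C_def by algebra
  moreover have "(A * N) ^ 4 * (P 4 * A) * (M 2 * M 6) ^ 2 = C * (A ^ 3 * N ^ 2)"
    unfolding C_def by algebra
  ultimately have "A ^ 2 * M 6 * M 2 / (P 2 * P 6 * M 4 ^ 2)
      = (A * N) ^ 4 * (P 4 * A) * (M 2 * M 6) ^ 2 / (A ^ 3 * N ^ 2)"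
    by (simp add: euler)
  thus ?thesis
    unfolding A16 A4 N2 by (simp add: A_def N_def P_def M_def)
qed

lemma nome_numeral_mult: "nome (numeral k * \<tau>) = nome \<tau> ^ numeral k"
proof -
  have "2 * pi * \<i> * (numeral k * \<tau>) = of_nat (numeral k) * (2 * pi * \<i> * \<tau>)" by simp
  thus ?thesis unfolding nome_def by (simp only: exp_of_nat_mult)
qed

lemma nome_nonzero: "nome \<tau> \<noteq> 0"
  by (simp add: nome_def)

lemma norm_nome_less_one: "Im \<tau> > 0 \<Longrightarrow> norm (nome \<tau>) < 1"
  by (simp add: nome_def norm_exp_eq_Re)

lemma dedekind_eta_numeral_mult:
  "dedekind_eta (numeral k * \<tau>)
     = exp (2 * pi * \<i> * \<tau> / 24) ^ numeral k * qpoch_inf (nome \<tau> ^ numeral k) (nome \<tau> ^ numeral k)"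
proof -
  have "2 * pi * \<i> * (numeral k * \<tau>) / 24 = of_nat (numeral k) * (2 * pi * \<i> * \<tau> / 24)" by simp
  thus ?thesis unfolding dedekind_eta_def nome_numeral_mult by (simp only: exp_of_nat_mult)
qed

lemma dedekind_eta_quotient_16_8:
  "dedekind_eta (16 * \<tau>) ^ 4 / dedekind_eta (8 * \<tau>) ^ 2
     = nome \<tau> ^ 2 * qpoch_inf (nome \<tau> ^ 16) (nome \<tau> ^ 16) ^ 4 / qpoch_inf (nome \<tau> ^ 8) (nome \<tau> ^ 8) ^ 2"
proof -
  define r where "r = exp (2 * pi * \<i> * \<tau> / 24)"
  define A where "A = qpoch_inf (nome \<tau> ^ 16) (nome \<tau> ^ 16)"
  define B where "B = qpoch_inf (nome \<tau> ^ 8) (nome \<tau> ^ 8)"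
  have "r \<noteq> 0" by (simp add: r_def)
  have "2 * pi * \<i> * \<tau> = of_nat 24 * (2 * pi * \<i> * \<tau> / 24)" by simp
  hence "nome \<tau> = r ^ 24" unfolding nome_def r_def by (metis exp_of_nat_mult)
  have "dedekind_eta (16 * \<tau>) ^ 4 / dedekind_eta (8 * \<tau>) ^ 2 = (r ^ 48 * r ^ 16) * A ^ 4 / (r ^ 16 * B ^ 2)"
    unfolding dedekind_eta_numeral_mult r_def[symmetric] A_def[symmetric] B_def[symmetric]
    by (simp add: power_mult_distrib flip: power_mult power_add)
  also have "\<dots> = (r ^ 48 * A ^ 4) * r ^ 16 / (B ^ 2 * r ^ 16)"
    by (simp only: mult_ac)
  also have "\<dots> = (r ^ 24) ^ 2 * A ^ 4 / B ^ 2"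
    using \<open>r \<noteq> 0\<close> by (simp flip: power_mult)
  finally show ?thesis unfolding \<open>nome \<tau> = r ^ 24\<close>[symmetric] A_def B_def .
qed

lemma eta_theta_quotient_eq_product:
  fixes q :: complex
  assumes "Im \<tau> > 0" "q = nome \<tau>"
  shows "dedekind_eta (16 * \<tau>) ^ 4 / dedekind_eta (8 * \<tau>) ^ 2 * (ram_phi (q^2) / (q * ram_psi (q^8)))
       = q * (qpoch_inf (q^16) (q^16) ^ 4 * qpoch_inf (q^4) (q^4) * qpoch_inf (-(q^2)) (q^4) ^ 2
              / (qpoch_inf (q^8) (q^8) ^ 3 * qpoch_inf (-(q^8)) (q^8) ^ 2))"
proof -
  have q: "q \<noteq> 0" "norm q < 1"
    using nome_nonzero norm_nome_less_one[OF assms(1)] by (simp_all add: assms(2))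
  have "ram_phi (q^2) = qpoch_inf (q^4) (q^4) * qpoch_inf (-(q^2)) (q^4) ^ 2"
    using ram_phi_product[of "q^2"] q by (simp add: norm_power power_less_one_iff flip: power_mult)
  moreover have "ram_psi (q^8) = qpoch_inf (q^8) (q^8) * qpoch_inf (-(q^8)) (q^8) ^ 2"
    using ram_psi_product[of "q^8"] q by (simp add: norm_power power_less_one_iff)
  moreover have "q ^ 2 * a ^ 4 / b ^ 2 * (c * d ^ 2 / (q * (b * e ^ 2)))
      = q * (a ^ 4 * c * d ^ 2 / (b ^ 3 * e ^ 2))" for a b c d e :: complex
    using q(1) by (simp add: field_simps eval_nat_numeral)
  ultimately show ?thesis
    by (simp only: dedekind_eta_quotient_16_8 assms(2))
qed

theorem mainTheorem2:
  fixes \<tau> :: complex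
  assumes "Im \<tau> > 0"
  defines "q \<equiv> nome \<tau>"
  shows "(\<Sum>k::nat. (q ^ (2*k+1) + q ^ (3*(2*k+1))) / (1 - q ^ (8*(2*k+1))))
       - (\<Sum>k::nat. (q ^ (5*(2*k+1)) + q ^ (7*(2*k+1))) / (1 - q ^ (8*(2*k+1))))
       = dedekind_eta (16 * \<tau>) ^ 4 / dedekind_eta (8 * \<tau>) ^ 2
         * (ram_phi (q ^ 2) / (q * ram_psi (q ^ 8)))"
proof -
  have q: "q \<noteq> 0" "norm q < 1"
    using nome_nonzero norm_nome_less_one[OF assms(1)] by (simp_all add: q_def)
  show ?thesis
    unfolding eta_theta_quotient_eq_product[OF assms(1) q_def[THEN meta_eq_to_obj_eq]]
      lambert_difference_eq_kronecker_product[OF q] kronecker_product_q8_eq_eta_theta_product[OF q(2)] ..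
qed

end
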